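(* Let $L'=\{E,H,\leq\}$ where $E$ is binary, $H$ is ternary and $\leq$ is binary. Let $\mathbf F$ be the $\{E,H\}$-structure with vertex set $\{0,1,2,3\}$, $E^{\mathbf F}=\{(1,0),(1,2),(1,3)\}$ and $H^{\mathbf F}=\{(0,2,3)\}$, and let $\mathbf F'$ be its expansion to an $L'$-structure by the natural order of vertices. Let $\mathcal K$ be the class of all enumerated $L'$-structures $\mathbf A$ for which there is no monomorphism $\mathbf F\to\mathbf A$. Then $\mathcal K$ does not have the type-respecting amalgamation property.
   Context: A monomorphism is an injective map preserving the relations $E$ and $H$ (not necessarily reflecting them). In all $L'$-structures $\leq$ is a linear order, finite or of type $\omega$; an enumerated structure has underlying set an ordinal $|A|$ ordered by $\leq$; embeddings are monotone, injective, and preserve and reflect all relations. $\mathbf A({<}v)$ is the substructure on $\{a<v\}$ (an initial segment). Weak types: $L'^f$ is $L'$ plus a unary partial function $f$. An $L'^f$-structure $\mathbf T$ is a weak type of level $\ell$ if $T=\{0,\dots,\ell-1,t_0,t_1,\dots\}$; every tuple in every relation $R^{\mathbf T}$, $R\in L'$, meets $\{t_0,t_1,\dots\}$ in a set $\{t_i:i<k\}$ and meets $\{0,\dots,\ell-1\}$; and $f(t_i)=t_{i-1}$ ($i>0$), $f(t_0)=t_0$, $f$ undefined otherwise. An increasing tuple $(a_0,\dots,a_{k-1})$ of vertices of $A\setminus\ell$ in an enumerated $\mathbf A$ has type $\mathbf T$ on level $\ell$ if the map $h$ (identity on $\ell$, $t_i\mapsto a_i$) satisfies $\vec b\in R^{\mathbf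 T}\iff h(\vec b)\in R^{\mathbf A}$ for all $R\in L'$ and all tuples $\vec b$ from $\{0,\dots,\ell-1,t_0,\dots,t_{k-1}\}$ meeting the type vertices in an initial segment and meeting $\{0,\dots,\ell-1\}$. $\mathbf T$ extends $\mathbf A$ if $\mathbf T$ minus its type vertices is $\mathbf A$; $\mathbf T,\mathbf T'$ agree as $n$-types if they coincide on $A\cup\{t_0,\dots,t_{n-1}\}$. For finite enumerated $\mathbf A$, $\mathbf A^+$ is the disjoint union of all weak types extending $\mathbf A$, with all copies of $\mathbf A$ identified and the copies of $t_i$ in $\mathbf T,\mathbf T'$ identified whenever $\mathbf T,\mathbf T'$ agree as $(i+1)$-types. An embedding $h:\mathbf A\to\mathbf B$ is type-respecting if for each $v\in A$ there is an embedding $h^v:\mathbf A({<}v)^+\to\mathbf B({<}h(v))^+$ whose image contains all weak types on level $h(v)$ of tuples of vertices of $h[A]$. For finite enumerated $\mathbf A,\mathbf B$, $h:\mathbf A^+\to\mathbf B^+$ is type-respecting (resp. $\mathcal K$-type-respecting) if for every $\mathbf A'$ (resp. $\mathbf A'\in\mathcal K$) with initial segment $\mathbf A$ there are $\mathbf B'$ (resp. $\mathbf B'\in\mathcal K$) with initial segment $\mathbf B$ and a type-respecting embedding $g:\mathbf A'\to\mathbf B'$ with $g\restriction A=h\restriction A$ and with every weak type in $\mathbf B'$ of level $g(\max A)$ of a tuple of vertices of $g[A']$ lying in $h[A^+]$. A hereditary class $\mathcal K$ of enumerated structures has the type-respecting amalgamation property if for all finite enumerated $\mathbf A,\mathbf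 B,\mathbf B'\in\mathcal K$ with $B'\setminus B=\{\max B'\}$ and $\mathbf B'\restriction B=\mathbf B$, all $\mathcal K$-type-respecting $f:\mathbf A^+\to\mathbf B^+$, $f':\mathbf A^+\to\mathbf B'^+$ and every type-respecting $g:\mathbf B^+\to\mathbf B'^+$ with $g\restriction B=\mathrm{Id}$ and $g\circ f=f'$, there is a $\mathcal K$-type-respecting $g':\mathbf B^+\to\mathbf B'^+$ with $g'\circ f=f'$ and $g'\restriction B=\mathrm{Id}$. *)

theory Defs
  imports Main
begin

datatype 'a fact = FE 'a 'a | FH 'a 'a 'a | FL 'a 'a

text \<open>An enumerated structure has underlying set an ordinal (a finite n or omega), ordered
  by the natural order; we store the carrier and the relations E and H.\<close>
record estr =
  ecar :: "nat set"
  eE :: "(nat \<times> nat) set"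
  eH :: "(nat \<times> nat \<times> nat) set"

definition enumerated :: "estr \<Rightarrow> bool" where
  "enumerated A \<longleftrightarrow> (ecar A = UNIV \<or> (\<exists>n. ecar A = {..<n}))
     \<and> eE A \<subseteq> ecar A \<times> ecar A \<and> eH A \<subseteq> ecar A \<times> ecar A \<times> ecar A"

definition rels_of :: "estr \<Rightarrow> nat fact set" where
  "rels_of A = {FE a b | a b. (a, b) \<in> eE A} \<union> {FH a b c | a b c. (a, b, c) \<in> eH A}
     \<union> {FL a b | a b. a \<in> ecar A \<and> b \<in> ecar A \<and> a \<le> b}"

definition restr :: "estr \<Rightarrow> nat \<Rightarrow> estr" where
  "restr A v = \<lparr>ecar = ecar A \<inter> {..<v}, eE = eE A \<inter> ({..<v} \<times> {..<v}),
     eH = eH A \<inter> ({..<v} \<times> {..<v} \<times> {..<v})\<rparr>"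

definition init_seg :: "estr \<Rightarrow> estr \<Rightarrow> bool" where
  "init_seg A A' \<longleftrightarrow> finite (ecar A) \<and> ecar A \<subseteq> ecar A' \<and> A = restr A' (card (ecar A))"

definition emb_e :: "estr \<Rightarrow> estr \<Rightarrow> (nat \<Rightarrow> nat) \<Rightarrow> bool" where
  "emb_e A B h \<longleftrightarrow> h ` ecar A \<subseteq> ecar B \<and> inj_on h (ecar A) \<and>
     (\<forall>\<phi>. set_fact \<phi> \<subseteq> ecar A \<longrightarrow> (\<phi> \<in> rels_of A \<longleftrightarrow> map_fact h \<phi> \<in> rels_of B))"

definition mono_EH :: "estr \<Rightarrow> estr \<Rightarrow> (nat \<Rightarrow> nat) \<Rightarrow> bool" where
  "mono_EH F A m \<longleftrightarrow> inj_on m (ecar F) \<and> m ` ecar F \<subseteq> ecar A \<and>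
     (\<forall>a b. (a, b) \<in> eE F \<longrightarrow> (m a, m b) \<in> eE A) \<and>
     (\<forall>a b c. (a, b, c) \<in> eH F \<longrightarrow> (m a, m b, m c) \<in> eH A)"

text \<open>Atoms of a weak type of level l: base vertices 0..l-1 and type vertices t_0, t_1, ...\<close>
datatype atom = Bs nat | Tv nat

text \<open>A relational tuple allowed in a weak type of level l with type vertices among
  t_0..t_(m-1): it meets the base, and meets the type vertices in a nonempty initial segment
  {t_i : i < k}.  (Tuples meeting no type vertex form the base structure A itself, which is
  fixed, so a weak type extending A is determined by its set of such proper tuples.)\<close>
definition proper :: "nat \<Rightarrow> nat \<Rightarrow> atom fact \<Rightarrow> bool" where
  "proper l m \<phi> \<longleftrightarrow> set_fact \<phi> \<subseteq> Bs ` {..<l} \<union> Tv ` {..<m} \<and>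
     (\<exists>j. Bs j \<in> set_fact \<phi>) \<and> (\<exists>k>0. {i. Tv i \<in> set_fact \<phi>} = {..<k})"

definition trunc :: "nat \<Rightarrow> atom fact set \<Rightarrow> atom fact set" where
  "trunc n S = {\<phi> \<in> S. \<forall>i. Tv i \<in> set_fact \<phi> \<longrightarrow> i < n}"

fun interp :: "nat list \<Rightarrow> atom \<Rightarrow> nat" where
  "interp as (Bs j) = j"
| "interp as (Tv i) = as ! i"

text \<open>The weak type (as a k-type, k = length as) on level l of the increasing tuple as
  of vertices of B (all at least l).\<close>
definition tp :: "estr \<Rightarrow> nat \<Rightarrow> nat list \<Rightarrow> atom fact set" where
  "tp B l as = {\<phi>. proper l (length as) \<phi> \<and> map_fact (interp as) \<phi> \<in> rels_of B}"

record 'v lfs =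
  lcar :: "'v set"
  lrels :: "'v fact set"
  lfn :: "'v \<Rightarrow> 'v option"

definition is_emb :: "('v, 'x) lfs_scheme \<Rightarrow> ('w, 'y) lfs_scheme \<Rightarrow> ('v \<Rightarrow> 'w) \<Rightarrow> bool" where
  "is_emb M N h \<longleftrightarrow> h ` lcar M \<subseteq> lcar N \<and> inj_on h (lcar M) \<and>
     (\<forall>\<phi>. set_fact \<phi> \<subseteq> lcar M \<longrightarrow> (\<phi> \<in> lrels M \<longleftrightarrow> map_fact h \<phi> \<in> lrels N)) \<and>
     (\<forall>x\<in>lcar M. lfn N (h x) = map_option h (lfn M x))"

text \<open>Vertices of A^+: base vertices, and the copy of t_i, identified by the (i+1)-type.\<close>
datatype pv = PB nat | PT nat "atom fact set"

definition plus_car :: "estr \<Rightarrow> pv set" where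
  "plus_car A = PB ` ecar A \<union>
     {PT i S | i S. S \<subseteq> {\<phi>. proper (card (ecar A)) (Suc i) \<phi>}}"

fun sig :: "atom fact set \<Rightarrow> atom \<Rightarrow> pv" where
  "sig S (Bs j) = PB j"
| "sig S (Tv i) = PT i (trunc (Suc i) S)"

definition plus_rels :: "estr \<Rightarrow> pv fact set" where
  "plus_rels A = map_fact PB ` rels_of A \<union>
     {map_fact (sig S) \<phi> | m S \<phi>. S \<subseteq> {\<psi>. proper (card (ecar A)) m \<psi>} \<and> \<phi> \<in> S}"

fun plus_fn :: "pv \<Rightarrow> pv option" where
  "plus_fn (PB j) = None"
| "plus_fn (PT 0 S) = Some (PT 0 S)"
| "plus_fn (PT (Suc i) S) = Some (PT i (trunc (Suc i) S))"

definition plus :: "estr \<Rightarrow> pv lfs" where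
  "plus A = \<lparr>lcar = plus_car A, lrels = plus_rels A, lfn = plus_fn\<rparr>"

definition tr_emb :: "estr \<Rightarrow> estr \<Rightarrow> (nat \<Rightarrow> nat) \<Rightarrow> bool" where
  "tr_emb A B h \<longleftrightarrow> emb_e A B h \<and>
     (\<forall>v\<in>ecar A. \<exists>hv. is_emb (plus (restr A v)) (plus (restr B (h v))) hv \<and>
        (\<forall>as. as \<noteq> [] \<and> sorted_wrt (<) as \<and> set as \<subseteq> h ` ecar A \<and> (\<forall>a\<in>set as. h v \<le> a)
           \<longrightarrow> PT (length as - 1) (tp B (h v) as) \<in> hv ` plus_car (restr A v)))"

text \<open>Type-respecting (P = everything) resp. K-type-respecting (P = membership in K)
  embeddings A^+ -> B^+ for finite enumerated A, B.\<close>
definition trp :: "(estr \<Rightarrow> bool) \<Rightarrow> estr \<Rightarrow> estr \<Rightarrow> (pv \<Rightarrow> pv) \<Rightarrow> bool" where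
  "trp P A B h \<longleftrightarrow> is_emb (plus A) (plus B) h \<and>
     (\<forall>A'. enumerated A' \<and> P A' \<and> init_seg A A' \<longrightarrow>
        (\<exists>B' g. enumerated B' \<and> P B' \<and> init_seg B B' \<and> tr_emb A' B' g \<and>
           (\<forall>a\<in>ecar A. PB (g a) = h (PB a)) \<and>
           (\<forall>as. as \<noteq> [] \<and> sorted_wrt (<) as \<and> set as \<subseteq> g ` ecar A' \<and>
                 (\<forall>a\<in>set as. card (ecar B) \<le> a)
              \<longrightarrow> PT (length as - 1) (tp B' (card (ecar B)) as) \<in> h ` plus_car A)))"

definition type_respecting_AP :: "estr set \<Rightarrow> bool" where
  "type_respecting_AP K \<longleftrightarrow>
    (\<forall>A B B' f f' g.
       A \<in> K \<and> B \<in> K \<and> B' \<in> K \<and>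
       enumerated A \<and> enumerated B \<and> enumerated B' \<and>
       finite (ecar A) \<and> finite (ecar B) \<and> finite (ecar B') \<and>
       ecar B' - ecar B = {Max (ecar B')} \<and> restr B' (card (ecar B)) = B \<and>
       trp (\<lambda>X. X \<in> K) A B f \<and> trp (\<lambda>X. X \<in> K) A B' f' \<and>
       trp (\<lambda>_. True) B B' g \<and> (\<forall>b\<in>ecar B. g (PB b) = PB b) \<and>
       (\<forall>x\<in>plus_car A. g (f x) = f' x)
     \<longrightarrow> (\<exists>g'. trp (\<lambda>X. X \<in> K) B B' g' \<and> (\<forall>x\<in>plus_car A. g' (f x) = f' x) \<and>
               (\<forall>b\<in>ecar B. g' (PB b) = PB b)))"

definition F :: estr where
  "F = \<lparr>ecar = {0, 1, 2, 3}, eE = {(1, 0), (1, 2), (1, 3)}, eH = {(0, 2, 3)}\<rparr>"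

definition K :: "estr set" where
  "K = {A. enumerated A \<and> \<not> (\<exists>m. mono_EH F A m)}"

end

(* Take A = {0}, B = A plus an isolated vertex 1, and B' = B plus a vertex 2 with E(2,1).
   The maps f : A^+ -> B^+, f' : A^+ -> B'^+ and g : B^+ -> B'^+ of the amalgamation problem come
   from inserting the new vertices into an arbitrary extension right after the old ones; for f' and
   g the new vertex 2 moreover becomes an E-predecessor of every later vertex of which 0 is one.
   Insertion is type-respecting, keeps F-freeness (a copy of F centred at 2 can be recentred at 0),
   and g o f = f'.

   Let g' : B^+ -> B'^+ be K-type-respecting, fixing B, with g' o f = f'.  Extend B to W by two
   vertices 2, 3 with E(0,2), E(0,3) and H(1,2,3); both realise the type f(U) over B, where
   U = {E(0,t), 0 <= t}.  In an extension B'' of B' receiving W, the types over B' of the images x, y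
   of 2 and 3 lie in the image of g'.  A base-fixing embedding of weak types can only send a type to
   an extension of it, so these types are g'(f(U)) = f'(U), which contains E(2,t).  Hence E(2,1),
   E(2,x), E(2,y) and H(1,x,y) form a copy of F in B''. *)

theory Submission
  imports Defs
begin

lemma rels_of_simps [simp]:
  "FE a b \<in> rels_of X \<longleftrightarrow> (a, b) \<in> eE X"
  "FH a b c \<in> rels_of X \<longleftrightarrow> (a, b, c) \<in> eH X"
  "FL a b \<in> rels_of X \<longleftrightarrow> a \<in> ecar X \<and> b \<in> ecar X \<and> a \<le> b"
  by (auto simp: rels_of_def)

lemma set_fact_subset_ecar:
  assumes "eE X \<subseteq> ecar X \<times> ecar X" "eH X \<subseteq> ecar X \<times> ecar X \<times> ecar X" "\<phi> \<in> rels_of X"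
  shows "set_fact \<phi> \<subseteq> ecar X"
  using assms by (cases \<phi>) auto

lemma restr_simps [simp]:
  "ecar (restr X v) = ecar X \<inter> {..<v}"
  "eE (restr X v) = eE X \<inter> ({..<v} \<times> {..<v})"
  "eH (restr X v) = eH X \<inter> ({..<v} \<times> {..<v} \<times> {..<v})"
  by (simp_all add: restr_def)

lemma rels_of_restr: "rels_of (restr X v) = {\<phi> \<in> rels_of X. set_fact \<phi> \<subseteq> {..<v}}"
proof (rule set_eqI)
  show "\<phi> \<in> rels_of (restr X v) \<longleftrightarrow> \<phi> \<in> {\<phi> \<in> rels_of X. set_fact \<phi> \<subseteq> {..<v}}" for \<phi>
    by (cases \<phi>) auto
qed

lemma restr_restr: "u \<le> v \<Longrightarrow> restr (restr X v) u = restr X u"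
  by (auto simp: restr_def)

lemma enumerated_E: "enumerated X \<Longrightarrow> eE X \<subseteq> ecar X \<times> ecar X"
  and enumerated_H: "enumerated X \<Longrightarrow> eH X \<subseteq> ecar X \<times> ecar X \<times> ecar X"
  unfolding enumerated_def by auto

lemma enumerated_lessThan_subset: "enumerated X \<Longrightarrow> v \<in> ecar X \<Longrightarrow> {..<v} \<subseteq> ecar X"
  unfolding enumerated_def by auto

lemma enumerated_restr_car: "enumerated X \<Longrightarrow> v \<in> ecar X \<Longrightarrow> ecar (restr X v) = {..<v}"
  using enumerated_lessThan_subset by fastforce

lemma enumerated_lessThan_iff:
  "enumerated \<lparr>ecar = {..<k}, eE = E, eH = H\<rparr> \<longleftrightarrow>
     E \<subseteq> {..<k} \<times> {..<k} \<and> H \<subseteq> {..<k} \<times> {..<k} \<times> {..<k}"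
  unfolding enumerated_def by auto

lemma map_fact_eqD: "map_fact f \<phi> = map_fact g \<phi> \<Longrightarrow> x \<in> set_fact \<phi> \<Longrightarrow> f x = g x"
  by (cases \<phi>) auto

lemma map_fact_cong_id: "(\<And>x. x \<in> set_fact \<phi> \<Longrightarrow> f x = x) \<Longrightarrow> map_fact f \<phi> = \<phi>"
  by (cases \<phi>) auto

lemma map_fact_PB_obtain:
  assumes "set_fact \<Phi> \<subseteq> PB ` V"
  obtains \<phi> where "\<Phi> = map_fact PB \<phi>" "set_fact \<phi> \<subseteq> V"
proof
  show "\<Phi> = map_fact PB (map_fact (inv PB) \<Phi>)"
    using assms by (auto simp: fact.map_comp f_inv_into_f intro!: map_fact_cong_id[symmetric])
  show "set_fact (map_fact (inv PB) \<Phi>) \<subseteq> V"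
    using assms by (auto simp: fact.set_map inv_f_f inj_def)
qed

section \<open>Weak types and A^+\<close>

lemma proper_Tv0: "proper l m \<phi> \<Longrightarrow> Tv 0 \<in> set_fact \<phi>"
  unfolding proper_def by force

lemma proper_TvD: "proper l m \<phi> \<Longrightarrow> Tv i \<in> set_fact \<phi> \<Longrightarrow> i < m"
  and proper_BsD: "proper l m \<phi> \<Longrightarrow> Bs j \<in> set_fact \<phi> \<Longrightarrow> j < l"
  unfolding proper_def by auto

lemma proper_top_Tv:
  assumes "proper l m \<phi>"
  obtains k where "0 < k" "Tv (k - 1) \<in> set_fact \<phi>" "\<And>i. Tv i \<in> set_fact \<phi> \<Longrightarrow> i < k"
proof -
  obtain k where k: "0 < k" "{i. Tv i \<in> set_fact \<phi>} = {..<k}"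
    using assms unfolding proper_def by blast
  then have "Tv (k - 1) \<in> set_fact \<phi>" by (metis diff_less lessThan_iff mem_Collect_eq zero_less_one)
  with k that show ?thesis by blast
qed

lemma proper_mono: "proper l m \<phi> \<Longrightarrow> l \<le> l' \<Longrightarrow> proper l' m \<phi>"
  unfolding proper_def by (meson Un_mono image_mono lessThan_subset_iff order_refl order_trans)

lemma proper_trunc: "proper l m \<phi> \<Longrightarrow> (\<And>i. Tv i \<in> set_fact \<phi> \<Longrightarrow> i < k) \<Longrightarrow> proper l k \<phi>"
  unfolding proper_def by blast

lemma proper_FE: "j < l \<Longrightarrow> 0 < m \<Longrightarrow> proper l m (FE (Bs j) (Tv 0))"
  and proper_FL: "j < l \<Longrightarrow> 0 < m \<Longrightarrow> proper l m (FL (Bs j) (Tv 0))"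
  unfolding proper_def by (auto intro!: exI[of _ 1])

lemma trunc_subset: "trunc k S \<subseteq> S"
  by (auto simp: trunc_def)

lemma trunc_trunc: "j \<le> k \<Longrightarrow> trunc j (trunc k S) = trunc j S"
  by (auto simp: trunc_def)

lemma trunc_proper: "S \<subseteq> Collect (proper l m) \<Longrightarrow> trunc m S = S"
  by (auto simp: trunc_def dest: proper_TvD)

lemma tp_proper: "tp B l as \<subseteq> Collect (proper l (length as))"
  by (auto simp: tp_def)

lemma plus_car_PB [simp]: "PB a \<in> plus_car X \<longleftrightarrow> a \<in> ecar X"
  and plus_car_PT [simp]: "PT i S \<in> plus_car X \<longleftrightarrow> S \<subseteq> Collect (proper (card (ecar X)) (Suc i))"
  by (auto simp: plus_car_def)

lemma is_emb_id: "is_emb M M id"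
  unfolding is_emb_def by (simp add: fact.map_id option.map_id)

fun atom_of :: "pv \<Rightarrow> atom" where
  "atom_of (PB j) = Bs j"
| "atom_of (PT i S) = Tv i"

lemma atom_of_sig [simp]: "atom_of (sig S a) = a"
  by (cases a) auto

lemma map_atom_of_sig [simp]: "map_fact atom_of (map_fact (sig S) \<phi>) = \<phi>"
  by (simp add: fact.map_comp comp_def fact.map_ident)

lemma sig_atom_of: "y \<in> set_fact (map_fact (sig S) \<psi>) \<Longrightarrow> y = sig S (atom_of y)"
  by (auto simp: fact.set_map)

lemma map_sig_atom_of:
  "(\<And>y. y \<in> set_fact \<Phi> \<Longrightarrow> sig T (atom_of y) = y) \<Longrightarrow> map_fact (sig T) (map_fact atom_of \<Phi>) = \<Phi>"
  by (simp add: fact.map_comp map_fact_cong_id)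

lemma sig_in_plus_rels_iff:
  assumes S: "S \<subseteq> Collect (proper (card (ecar X)) m)" and \<phi>: "proper (card (ecar X)) m \<phi>"
  shows "map_fact (sig S) \<phi> \<in> plus_rels X \<longleftrightarrow> \<phi> \<in> S"
proof
  assume "\<phi> \<in> S"
  then show "map_fact (sig S) \<phi> \<in> plus_rels X" using S unfolding plus_rels_def by blast
next
  assume rel: "map_fact (sig S) \<phi> \<in> plus_rels X"
  have "PT 0 (trunc 1 S) \<in> set_fact (map_fact (sig S) \<phi>)"
    using proper_Tv0[OF \<phi>] by (metis fact.set_map imageI sig.simps(2) One_nat_def)
  moreover have "PT 0 (trunc 1 S) \<notin> set_fact (map_fact PB \<psi>)" for \<psi>
    by (auto simp: fact.set_map)
  ultimately have "map_fact (sig S) \<phi> \<notin> map_fact PB ` rels_of X"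
    by (metis imageE)
  with rel obtain m' S' \<phi>' where eq: "map_fact (sig S) \<phi> = map_fact (sig S') \<phi>'" and "\<phi>' \<in> S'"
    unfolding plus_rels_def by blast
  moreover have "\<phi>' = \<phi>" using arg_cong[OF eq, of "map_fact atom_of"] by simp
  moreover obtain k where k: "0 < k" "Tv (k - 1) \<in> set_fact \<phi>" "\<And>i. Tv i \<in> set_fact \<phi> \<Longrightarrow> i < k"
    using proper_top_Tv[OF \<phi>] by blast
  ultimately have "sig S (Tv (k - 1)) = sig S' (Tv (k - 1))" and "\<phi> \<in> trunc k S'"
    by (metis map_fact_eqD, auto simp: trunc_def)
  with k(1) have "\<phi> \<in> trunc k S" by (metis One_nat_def Suc_pred sig.simps(2) pv.inject(2))
  then show "\<phi> \<in> S" using trunc_subset by blast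
qed

lemma tp_in_plus_car: "as \<noteq> [] \<Longrightarrow> card (ecar Z) = v \<Longrightarrow> PT (length as - 1) (tp Y v as) \<in> plus_car Z"
  by (auto simp: tp_def)

lemma trpI:
  assumes "is_emb (plus A) (plus B) h"
    and "\<And>A'. enumerated A' \<Longrightarrow> P A' \<Longrightarrow> init_seg A A' \<Longrightarrow>
      enumerated (ext A') \<and> P (ext A') \<and> init_seg B (ext A') \<and> tr_emb A' (ext A') (emb A') \<and>
      (\<forall>a\<in>ecar A. PB (emb A' a) = h (PB a)) \<and>
      (\<forall>as. as \<noteq> [] \<and> set as \<subseteq> emb A' ` ecar A' \<and> (\<forall>a\<in>set as. card (ecar B) \<le> a)
         \<longrightarrow> PT (length as - 1) (tp (ext A') (card (ecar B)) as) \<in> h ` plus_car A)"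
  shows "trp P A B h"
  unfolding trp_def using assms by blast

section \<open>Inserting new vertices\<close>

definition shift :: "nat \<Rightarrow> nat \<Rightarrow> nat \<Rightarrow> nat" where
  "shift n d x = (if x < n then x else x + d)"

lemma shift_eq_iff [simp]: "shift n d x = shift n d y \<longleftrightarrow> x = y"
  and shift_le_iff [simp]: "shift n d x \<le> shift n d y \<longleftrightarrow> x \<le> y"
  and shift_less_iff [simp]: "shift n d x < shift n d y \<longleftrightarrow> x < y"
  by (auto simp: shift_def)

lemma shift_below: "x < n \<Longrightarrow> shift n d x = x"
  by (simp add: shift_def)

lemma shift_not_new: "n \<le> shift n d x \<Longrightarrow> shift n d x < n + d \<Longrightarrow> False"
  by (auto simp: shift_def split: if_splits)

lemma shift_less_add_iff: "n \<le> l \<Longrightarrow> shift n d x < l + d \<longleftrightarrow> x < l"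
  by (auto simp: shift_def)

lemma shift_less_iff_below: "shift n d x < n + d \<longleftrightarrow> x < n"
  by (auto simp: shift_def)

definition unshift :: "nat \<Rightarrow> nat \<Rightarrow> nat \<Rightarrow> nat" where
  "unshift n d y = (if y < n then y else y - d)"

lemma unshift_shift [simp]: "unshift n d (shift n d x) = x"
  by (auto simp: unshift_def shift_def)

text \<open>insert_block n d C B0 X turns an extension X of the first n vertices of B0 into an
  extension of B0: the vertices n, ..., n + d - 1 of B0 are inserted right after vertex n - 1, and
  each pair (s, t) \<in> C makes the new vertex t an E-predecessor of every vertex of X beyond n - 1
  of which s is an E-predecessor.\<close>

definition insert_block :: "nat \<Rightarrow> nat \<Rightarrow> (nat \<times> nat) set \<Rightarrow> estr \<Rightarrow> estr \<Rightarrow> estr" where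
  "insert_block n d C B0 X = \<lparr>ecar = {..<n + d} \<union> shift n d ` ecar X,
     eE = eE B0 \<union> map_prod (shift n d) (shift n d) ` eE X
          \<union> {(t, shift n d x) | s t x. (s, t) \<in> C \<and> (s, x) \<in> eE X \<and> n \<le> x},
     eH = eH B0 \<union> (\<lambda>(a, b, c). (shift n d a, shift n d b, shift n d c)) ` eH X\<rparr>"

lemma insert_block_simps [simp]:
  "ecar (insert_block n d C B0 X) = {..<n + d} \<union> shift n d ` ecar X"
  "eE (insert_block n d C B0 X) = eE B0 \<union> map_prod (shift n d) (shift n d) ` eE X
     \<union> {(t, shift n d x) | s t x. (s, t) \<in> C \<and> (s, x) \<in> eE X \<and> n \<le> x}"
  "eH (insert_block n d C B0 X) = eH B0 \<union> (\<lambda>(a, b, c). (shift n d a, shift n d b, shift n d c)) ` eH X"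
  by (simp_all add: insert_block_def)

fun shift_atom :: "nat \<Rightarrow> nat \<Rightarrow> atom \<Rightarrow> atom" where
  "shift_atom n d (Bs j) = Bs (shift n d j)"
| "shift_atom n d (Tv i) = Tv i"

lemma inj_shift_atom: "inj (shift_atom n d)"
proof (rule injI)
  show "shift_atom n d a = shift_atom n d b \<Longrightarrow> a = b" for a b
    by (cases a; cases b) auto
qed

lemma map_shift_atom_eq_iff [simp]:
  "map_fact (shift_atom n d) \<phi> = map_fact (shift_atom n d) \<psi> \<longleftrightarrow> \<phi> = \<psi>"
  using fact.inj_map[OF inj_shift_atom] by (auto dest: injD)

lemma shift_atom_eq_Tv [simp]: "shift_atom n d x = Tv i \<longleftrightarrow> x = Tv i"
  and Tv_eq_shift_atom [simp]: "Tv i = shift_atom n d x \<longleftrightarrow> x = Tv i"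
  by (cases x; auto)+

lemma Bs_eq_shift_atom_iff: "Bs j = shift_atom n d x \<longleftrightarrow> (\<exists>j'. x = Bs j' \<and> j = shift n d j')"
  by (cases x) auto

lemma Tv_in_shift_atom_image [simp]: "Tv i \<in> shift_atom n d ` A \<longleftrightarrow> Tv i \<in> A"
  by (auto intro: rev_image_eqI[where x="Tv i"])

lemma Bs_new_notin_shift_atom:
  "Bs j \<in> set_fact (map_fact (shift_atom n d) \<phi>) \<Longrightarrow> n \<le> j \<Longrightarrow> j < n + d \<Longrightarrow> False"
  by (cases \<phi>) (auto simp: Bs_eq_shift_atom_iff dest: shift_not_new)

definition inserted_facts :: "nat \<Rightarrow> nat \<Rightarrow> (nat \<times> nat) set \<Rightarrow> atom fact set \<Rightarrow> atom fact set" where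
  "inserted_facts n d C S = {FL (Bs j) (Tv 0) | j. n \<le> j \<and> j < n + d}
     \<union> {FE (Bs t) (Tv 0) | s t. (s, t) \<in> C \<and> FE (Bs s) (Tv 0) \<in> S}"

definition shift_type :: "nat \<Rightarrow> nat \<Rightarrow> (nat \<times> nat) set \<Rightarrow> atom fact set \<Rightarrow> atom fact set" where
  "shift_type n d C S = map_fact (shift_atom n d) ` S \<union> inserted_facts n d C S"

fun shift_plus :: "nat \<Rightarrow> nat \<Rightarrow> (nat \<times> nat) set \<Rightarrow> pv \<Rightarrow> pv" where
  "shift_plus n d C (PB a) = PB (shift n d a)"
| "shift_plus n d C (PT i S) = PT i (shift_type n d C S)"

lemma inserted_facts_new_vertex:
  "\<psi> \<in> inserted_facts n d C S \<Longrightarrow> snd ` C \<subseteq> {n..<n + d} \<Longrightarrow>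
     \<exists>j. n \<le> j \<and> j < n + d \<and> Bs j \<in> set_fact \<psi>"
  unfolding inserted_facts_def by force

lemma shift_atom_in_shift_type_iff:
  assumes "snd ` C \<subseteq> {n..<n + d}"
  shows "map_fact (shift_atom n d) \<phi> \<in> shift_type n d C S \<longleftrightarrow> \<phi> \<in> S"
proof -
  have "map_fact (shift_atom n d) \<phi> \<notin> inserted_facts n d C S"
    using inserted_facts_new_vertex[OF _ assms] Bs_new_notin_shift_atom by blast
  then show ?thesis unfolding shift_type_def by auto
qed

lemma shift_type_eq_iff:
  "snd ` C \<subseteq> {n..<n + d} \<Longrightarrow> shift_type n d C S = shift_type n d C S' \<longleftrightarrow> S = S'"
  by (metis shift_atom_in_shift_type_iff subsetI subset_antisym)

lemma trunc_shift_type: "0 < k \<Longrightarrow> trunc k (shift_type n d C S) = shift_type n d C (trunc k S)"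
  unfolding shift_type_def inserted_facts_def trunc_def by (auto simp: fact.set_map)

lemma proper_shift_atom:
  assumes "proper l m \<phi>" "n \<le> l"
  shows "proper (l + d) m (map_fact (shift_atom n d) \<phi>)"
proof -
  obtain j where "Bs j \<in> set_fact \<phi>" using assms(1) unfolding proper_def by blast
  then have "Bs (shift n d j) \<in> shift_atom n d ` set_fact \<phi>" by (rule rev_image_eqI) simp
  with assms show ?thesis unfolding proper_def fact.set_map by (auto simp: shift_less_add_iff)
qed

lemma shift_type_proper:
  assumes "S \<subseteq> Collect (proper l m)" "n \<le> l" "snd ` C \<subseteq> {n..<n + d}" "0 < m"
  shows "shift_type n d C S \<subseteq> Collect (proper (l + d) m)"
proof -
  have "inserted_facts n d C S \<subseteq> Collect (proper (l + d) m)"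
    using assms(2-4) unfolding inserted_facts_def by (force intro: proper_FE proper_FL)
  with assms(1,2) show ?thesis unfolding shift_type_def by (auto intro: proper_shift_atom)
qed

lemma atom_of_shift_plus [simp]: "atom_of (shift_plus n d C x) = shift_atom n d (atom_of x)"
  by (cases x) auto

lemma shift_plus_sig: "shift_plus n d C (sig S a) = sig (shift_type n d C S) (shift_atom n d a)"
  by (cases a) (auto simp: trunc_shift_type)

lemma plus_fn_shift_plus: "plus_fn (shift_plus n d C x) = map_option (shift_plus n d C) (plus_fn x)"
  by (cases x rule: plus_fn.cases) (auto simp: trunc_shift_type)

lemma inj_shift_plus: "snd ` C \<subseteq> {n..<n + d} \<Longrightarrow> inj (shift_plus n d C)"
proof (rule injI)
  show "shift_plus n d C x = shift_plus n d C y \<Longrightarrow> x = y" if "snd ` C \<subseteq> {n..<n + d}" for x y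
    using shift_type_eq_iff[OF that] by (cases x; cases y) auto
qed

lemma shift_shift: "shift (n + d) e (shift n d x) = shift n (d + e) x"
  by (simp add: shift_def)

lemma shift_type_shift_type:
  assumes C: "snd ` C \<subseteq> {n..<n + d}" and C': "fst ` C' \<subseteq> {..<n}"
  shows "shift_type (n + d) e C' (shift_type n d C S) = shift_type n (d + e) (C \<union> C') S"
proof -
  have shift_atom_shift_atom: "shift_atom (n + d) e (shift_atom n d a) = shift_atom n (d + e) a" for a
    by (cases a) (simp_all add: shift_shift)
  have "map_fact (shift_atom (n + d) e) \<psi> = \<psi>" if "\<psi> \<in> inserted_facts n d C S" for \<psi>
    using that C unfolding inserted_facts_def by (auto simp: shift_def)
  then have "map_fact (shift_atom (n + d) e) ` shift_type n d C S
      = map_fact (shift_atom n (d + e)) ` S \<union> inserted_facts n d C S"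
    unfolding shift_type_def image_Un image_image fact.map_comp comp_def shift_atom_shift_atom
    by simp
  moreover have "FE (Bs s) (Tv 0) \<in> shift_type n d C S \<longleftrightarrow> FE (Bs s) (Tv 0) \<in> S" if "s \<in> fst ` C'" for s
    using C' that shift_atom_in_shift_type_iff[OF C, of "FE (Bs s) (Tv 0)" S]
    by (auto simp: shift_below)
  then have "inserted_facts (n + d) e C' (shift_type n d C S) = inserted_facts (n + d) e C' S"
    unfolding inserted_facts_def by (fastforce simp: image_iff)
  moreover have "inserted_facts n (d + e) (C \<union> C') S = inserted_facts n d C S \<union> inserted_facts (n + d) e C' S"
    unfolding inserted_facts_def by auto
  ultimately show ?thesis
    unfolding shift_type_def[of "n + d"] shift_type_def[of n "d + e"] by (simp add: Un_assoc)
qed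

lemma shift_plus_shift_plus:
  "snd ` C \<subseteq> {n..<n + d} \<Longrightarrow> fst ` C' \<subseteq> {..<n} \<Longrightarrow>
    shift_plus (n + d) e C' (shift_plus n d C x) = shift_plus n (d + e) (C \<union> C') x"
  by (cases x) (simp_all add: shift_shift shift_type_shift_type)

context
  fixes X Y :: estr and l n d :: nat and C :: "(nat \<times> nat) set"
  assumes car_X: "ecar X = {..<l}"
    and E_X: "eE X \<subseteq> ecar X \<times> ecar X" and H_X: "eH X \<subseteq> ecar X \<times> ecar X \<times> ecar X"
    and car_Y: "ecar Y = {..<l + d}" and n_le_l: "n \<le> l" and C: "snd ` C \<subseteq> {n..<n + d}"
    and shift_emb: "\<And>\<phi>. set_fact \<phi> \<subseteq> ecar X \<Longrightarrow> \<phi> \<in> rels_of X \<longleftrightarrow> map_fact (shift n d) \<phi> \<in> rels_of Y"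
begin

private lemma card_X: "card (ecar X) = l" and card_Y: "card (ecar Y) = l + d"
  using car_X car_Y by simp_all

lemma shift_plus_plus_car: "x \<in> plus_car X \<Longrightarrow> shift_plus n d C x \<in> plus_car Y"
proof (cases x)
  case (PT i S)
  then show "x \<in> plus_car X \<Longrightarrow> shift_plus n d C x \<in> plus_car Y"
    using shift_type_proper[OF _ n_le_l C, of S "Suc i"] card_X card_Y by simp
qed (use car_X car_Y n_le_l in \<open>auto simp: shift_less_add_iff\<close>)

lemma shift_plus_preserves_plus_rels:
  assumes "\<Phi> \<in> plus_rels X"
  shows "map_fact (shift_plus n d C) \<Phi> \<in> plus_rels Y"
  using assms unfolding plus_rels_def
proof (elim UnE imageE CollectE exE conjE)
  fix \<phi> assume \<phi>: "\<phi> \<in> rels_of X" and "\<Phi> = map_fact PB \<phi>"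
  then have "map_fact (shift_plus n d C) \<Phi> = map_fact PB (map_fact (shift n d) \<phi>)"
    by (simp add: fact.map_comp comp_def)
  moreover have "map_fact (shift n d) \<phi> \<in> rels_of Y"
    using \<phi> shift_emb set_fact_subset_ecar[OF E_X H_X \<phi>] by blast
  ultimately show "map_fact (shift_plus n d C) \<Phi> \<in> map_fact PB ` rels_of Y \<union>
    {map_fact (sig S) \<phi> |m S \<phi>. S \<subseteq> Collect (proper (card (ecar Y)) m) \<and> \<phi> \<in> S}" by blast
next
  fix m S \<psi> assume S: "S \<subseteq> Collect (proper (card (ecar X)) m)" and "\<psi> \<in> S"
    and \<Phi>: "\<Phi> = map_fact (sig S) \<psi>"
  then have "0 < m" using proper_Tv0 proper_TvD by blast
  then have "shift_type n d C S \<subseteq> Collect (proper (card (ecar Y)) m)"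
    using shift_type_proper[OF _ n_le_l C] S card_X card_Y by auto
  moreover have "map_fact (shift_atom n d) \<psi> \<in> shift_type n d C S"
    using \<open>\<psi> \<in> S\<close> by (simp add: shift_type_def)
  moreover have "map_fact (shift_plus n d C) \<Phi> = map_fact (sig (shift_type n d C S)) (map_fact (shift_atom n d) \<psi>)"
    using \<Phi> by (simp add: fact.map_comp comp_def shift_plus_sig)
  ultimately show "map_fact (shift_plus n d C) \<Phi> \<in> map_fact PB ` rels_of Y \<union>
    {map_fact (sig S) \<phi> |m S \<phi>. S \<subseteq> Collect (proper (card (ecar Y)) m) \<and> \<phi> \<in> S}" by blast
qed

lemma shift_plus_reflects_base_fact:
  assumes sub: "set_fact \<Phi> \<subseteq> plus_car X" and "\<phi>' \<in> rels_of Y"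
    and eq: "map_fact (shift_plus n d C) \<Phi> = map_fact PB \<phi>'"
  shows "\<Phi> \<in> plus_rels X"
proof -
  have "set_fact \<Phi> \<subseteq> PB ` ecar X"
  proof
    fix x assume x: "x \<in> set_fact \<Phi>"
    then have "shift_plus n d C x \<in> set_fact (map_fact PB \<phi>')" using eq by (metis fact.set_map imageI)
    then obtain a where "x = PB a" by (cases x) (auto simp: fact.set_map)
    with x sub show "x \<in> PB ` ecar X" by auto
  qed
  then obtain \<phi> where \<Phi>: "\<Phi> = map_fact PB \<phi>" and \<phi>: "set_fact \<phi> \<subseteq> ecar X"
    by (rule map_fact_PB_obtain)
  have "map_fact PB (map_fact (shift n d) \<phi>) = map_fact PB \<phi>'"
    using eq \<Phi> by (simp add: fact.map_comp comp_def)
  then have "map_fact (shift n d) \<phi> = \<phi>'" using fact.inj_map[of PB] by (auto simp: inj_def)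
  then have "\<phi> \<in> rels_of X" using shift_emb[OF \<phi>] \<open>\<phi>' \<in> rels_of Y\<close> by blast
  then show ?thesis using \<Phi> unfolding plus_rels_def by blast
qed

lemma shift_plus_reflects_type_fact:
  assumes sub: "set_fact \<Phi> \<subseteq> plus_car X"
    and S': "S' \<subseteq> Collect (proper (card (ecar Y)) m)" "\<psi>' \<in> S'"
    and eq: "map_fact (shift_plus n d C) \<Phi> = map_fact (sig S') \<psi>'"
  shows "\<Phi> \<in> plus_rels X"
proof -
  let ?\<psi> = "map_fact atom_of \<Phi>"
  have "\<psi>' = map_fact atom_of (map_fact (shift_plus n d C) \<Phi>)" by (simp add: eq)
  also have "\<dots> = map_fact (shift_atom n d) ?\<psi>" by (simp add: fact.map_comp comp_def)
  finally have \<psi>': "\<psi>' = map_fact (shift_atom n d) ?\<psi>" .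
  obtain k where k: "0 < k" "Tv (k - 1) \<in> set_fact \<psi>'" "\<And>i. Tv i \<in> set_fact \<psi>' \<Longrightarrow> i < k"
    using proper_top_Tv S' by blast
  have sig_S': "shift_plus n d C y = sig S' (atom_of (shift_plus n d C y))" if "y \<in> set_fact \<Phi>" for y
    using that eq by (metis fact.set_map imageI sig_atom_of)
  from k(2) obtain x where x: "x \<in> set_fact \<Phi>" "atom_of x = Tv (k - 1)"
    unfolding \<psi>' by (auto simp: fact.set_map)
  from x(2) obtain T where "x = PT (k - 1) T" by (cases x) auto
  with x(1) have T: "PT (k - 1) T \<in> set_fact \<Phi>" by simp
  then have T_proper: "T \<subseteq> Collect (proper l k)"
    using sub k(1) card_X by fastforce
  have shift_T: "shift_type n d C T = trunc k S'"
    using sig_S'[OF T] k(1) by simp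
  have "sig T (atom_of y) = y" if y: "y \<in> set_fact \<Phi>" for y
  proof (cases y)
    case (PT j U)
    have "Tv j \<in> set_fact \<psi>'" using y PT unfolding \<psi>' by (force simp: fact.set_map)
    then have "j < k" by (rule k(3))
    have "shift_type n d C U = trunc (Suc j) S'" using sig_S'[OF y] PT by simp
    also have "\<dots> = trunc (Suc j) (shift_type n d C T)" using \<open>j < k\<close> shift_T by (simp add: trunc_trunc)
    also have "\<dots> = shift_type n d C (trunc (Suc j) T)" by (simp add: trunc_shift_type)
    finally show ?thesis using PT shift_type_eq_iff[OF C] by simp
  qed simp
  then have \<Phi>: "\<Phi> = map_fact (sig T) ?\<psi>" by (simp add: map_sig_atom_of)
  have "\<psi>' \<in> trunc k S'" using S' k(3) by (auto simp: trunc_def)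
  then have "?\<psi> \<in> T" using shift_T \<psi>' shift_atom_in_shift_type_iff[OF C] by metis
  then show ?thesis using \<Phi> T_proper card_X unfolding plus_rels_def by blast
qed

lemma is_emb_shift_plus: "is_emb (plus X) (plus Y) (shift_plus n d C)"
proof -
  have "\<Phi> \<in> plus_rels X" if "set_fact \<Phi> \<subseteq> plus_car X" "map_fact (shift_plus n d C) \<Phi> \<in> plus_rels Y" for \<Phi>
  proof -
    from that(2) consider (base) \<phi>' where "\<phi>' \<in> rels_of Y" "map_fact (shift_plus n d C) \<Phi> = map_fact PB \<phi>'"
      | (type) m S' \<psi>' where "S' \<subseteq> Collect (proper (card (ecar Y)) m)" "\<psi>' \<in> S'"
          "map_fact (shift_plus n d C) \<Phi> = map_fact (sig S') \<psi>'"
      unfolding plus_rels_def by blast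
    then show ?thesis
      by cases (auto intro: shift_plus_reflects_base_fact[OF that(1)] shift_plus_reflects_type_fact[OF that(1)])
  qed
  then show ?thesis
    unfolding is_emb_def plus_def
    using shift_plus_plus_car shift_plus_preserves_plus_rels inj_shift_plus[OF C]
    by (auto simp: plus_fn_shift_plus inj_on_def inj_def)
qed

end

section \<open>Insertion is type-respecting\<close>

fun unshift_atom :: "nat \<Rightarrow> nat \<Rightarrow> atom \<Rightarrow> atom" where
  "unshift_atom n d (Bs j) = Bs (unshift n d j)"
| "unshift_atom n d (Tv i) = Tv i"

lemma map_fact_unshift_atom:
  assumes "\<And>j. Bs j \<in> set_fact \<phi> \<Longrightarrow> j < n \<or> n + d \<le> j"
  shows "map_fact (shift_atom n d) (map_fact (unshift_atom n d) \<phi>) = \<phi>"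
proof -
  have "shift_atom n d (unshift_atom n d a) = a" if "a \<in> set_fact \<phi>" for a
    by (cases a) (use that in \<open>auto simp: shift_def unshift_def dest: assms\<close>)
  then show ?thesis by (simp add: fact.map_comp map_fact_cong_id)
qed

lemma proper_unshift_atom:
  assumes p: "proper (l + d) m \<phi>" and "n \<le> l"
    and old: "\<And>j. Bs j \<in> set_fact \<phi> \<Longrightarrow> j < n \<or> n + d \<le> j"
  shows "proper l m (map_fact (unshift_atom n d) \<phi>)"
proof -
  have atoms: "unshift_atom n d a \<in> Bs ` {..<l} \<union> Tv ` {..<m}" if a: "a \<in> set_fact \<phi>" for a
  proof (cases a)
    case (Bs j)
    then have "j < n \<or> n + d \<le> j" "j < l + d" using a old proper_BsD[OF p] by auto
    with Bs \<open>n \<le> l\<close> show ?thesis by (auto simp: unshift_def)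
  next
    case (Tv i)
    then show ?thesis using a proper_TvD[OF p] by auto
  qed
  obtain j where "Bs j \<in> set_fact \<phi>" using p unfolding proper_def by blast
  then have base: "Bs (unshift n d j) \<in> unshift_atom n d ` set_fact \<phi>"
    by (metis imageI unshift_atom.simps(1))
  have "unshift_atom n d x = Tv i \<longleftrightarrow> x = Tv i" for x i by (cases x) auto
  then have "Tv i \<in> unshift_atom n d ` set_fact \<phi> \<longleftrightarrow> Tv i \<in> set_fact \<phi>" for i
    by (metis image_iff)
  then show ?thesis
    using p atoms base unfolding proper_def fact.set_map by (intro conjI image_subsetI) auto
qed

lemma interp_shift_atom:
  assumes "\<And>i. Tv i \<in> set_fact \<phi> \<Longrightarrow> i < length as"
  shows "map_fact (interp (map (shift n d) as)) (map_fact (shift_atom n d) \<phi>)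
    = map_fact (shift n d) (map_fact (interp as) \<phi>)"
  unfolding fact.map_comp
proof (rule fact.map_cong[OF refl])
  show "(interp (map (shift n d) as) \<circ> shift_atom n d) a = (shift n d \<circ> interp as) a"
    if "a \<in> set_fact \<phi>" for a
    by (cases a) (use that assms in auto)
qed

lemma shifted_list_obtain:
  assumes "n \<le> l" "set as \<subseteq> shift n d ` V" "\<forall>a\<in>set as. l + d \<le> a"
  obtains as0 where "as = map (shift n d) as0" "\<forall>x\<in>set as0. l \<le> x \<and> x \<in> V"
proof
  have unshift: "y - d \<in> V \<and> l \<le> y - d \<and> shift n d (y - d) = y" if y: "y \<in> set as" for y
  proof -
    obtain x where x: "x \<in> V" "y = shift n d x" using assms(2) y by blast
    moreover have "l + d \<le> y" using y assms(3) by blast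
    ultimately have "n \<le> x" "y = x + d" using assms(1) by (auto simp: shift_def split: if_splits)
    with x \<open>l + d \<le> y\<close> show ?thesis by (simp add: shift_def)
  qed
  show "as = map (shift n d) (map (\<lambda>y. y - d) as)" by (simp add: map_idI unshift)
  show "\<forall>x\<in>set (map (\<lambda>y. y - d) as). l \<le> x \<and> x \<in> V" using unshift by auto
qed

locale block_insertion =
  fixes n d :: nat and C :: "(nat \<times> nat) set" and A0 B0 :: estr
  assumes car_A0: "ecar A0 = {..<n}" and enumerated_B0: "enumerated B0"
    and car_B0: "ecar B0 = {..<n + d}" and restr_B0: "restr B0 n = A0"
    and copy_pairs: "C \<subseteq> {..<n} \<times> {n..<n + d}"
begin

lemma snd_copy_pairs: "snd ` C \<subseteq> {n..<n + d}"
  using copy_pairs by auto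

lemma E_B0: "eE B0 \<subseteq> {..<n + d} \<times> {..<n + d}"
  and H_B0: "eH B0 \<subseteq> {..<n + d} \<times> {..<n + d} \<times> {..<n + d}"
  using enumerated_E[OF enumerated_B0] enumerated_H[OF enumerated_B0] car_B0 by auto

context
  fixes X :: estr
  assumes X: "init_seg A0 X"
begin

lemma restr_X: "restr X n = A0" and lessThan_n_X: "{..<n} \<subseteq> ecar X"
  using X car_A0 unfolding init_seg_def by auto

lemma E_B0_iff: "a < n \<Longrightarrow> b < n \<Longrightarrow> (a, b) \<in> eE B0 \<longleftrightarrow> (a, b) \<in> eE X"
  and H_B0_iff: "a < n \<Longrightarrow> b < n \<Longrightarrow> c < n \<Longrightarrow> (a, b, c) \<in> eH B0 \<longleftrightarrow> (a, b, c) \<in> eH X"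
proof -
  have "eE B0 \<inter> {..<n} \<times> {..<n} = eE X \<inter> {..<n} \<times> {..<n}"
    and "eH B0 \<inter> {..<n} \<times> {..<n} \<times> {..<n} = eH X \<inter> {..<n} \<times> {..<n} \<times> {..<n}"
    using restr_B0 restr_X by (metis restr_simps(2), metis restr_simps(3))
  then show "a < n \<Longrightarrow> b < n \<Longrightarrow> (a, b) \<in> eE B0 \<longleftrightarrow> (a, b) \<in> eE X"
    and "a < n \<Longrightarrow> b < n \<Longrightarrow> c < n \<Longrightarrow> (a, b, c) \<in> eH B0 \<longleftrightarrow> (a, b, c) \<in> eH X"
    by blast+
qed

lemma insert_block_emb:
  assumes "set_fact \<phi> \<subseteq> ecar X"
  shows "\<phi> \<in> rels_of X \<longleftrightarrow> map_fact (shift n d) \<phi> \<in> rels_of (insert_block n d C B0 X)"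
proof (cases \<phi>)
  case (FE a b)
  have "(shift n d a, shift n d b) \<in> eE (insert_block n d C B0 X) \<Longrightarrow> (a, b) \<in> eE X"
  proof (elim insert_block_simps(2)[THEN equalityD1, THEN subsetD, THEN UnE])
    assume "(shift n d a, shift n d b) \<in> eE B0 \<union> map_prod (shift n d) (shift n d) ` eE X"
    moreover have "(shift n d a, shift n d b) \<in> eE B0 \<Longrightarrow> (a, b) \<in> eE X"
      using E_B0 E_B0_iff by (auto simp: shift_less_iff_below shift_below)
    ultimately show "(a, b) \<in> eE X" by auto
  next
    assume "(shift n d a, shift n d b) \<in> {(t, shift n d x) | s t x. (s, t) \<in> C \<and> (s, x) \<in> eE X \<and> n \<le> x}"
    then have "shift n d a \<in> snd ` C" by force
    then show "(a, b) \<in> eE X" using snd_copy_pairs shift_not_new by force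
  qed
  with FE show ?thesis by auto
next
  case (FH a b c)
  have "(shift n d a, shift n d b, shift n d c) \<in> eH B0 \<Longrightarrow> (a, b, c) \<in> eH X"
    using H_B0 H_B0_iff by (auto simp: shift_less_iff_below shift_below)
  with FH show ?thesis by force
next
  case (FL a b)
  with assms show ?thesis by auto
qed

lemma enumerated_insert_block:
  assumes "enumerated X"
  shows "enumerated (insert_block n d C B0 X)"
proof -
  have new_or_shifted: "x < n + d \<or> x = shift n d (x - d)" for x
    by (auto simp: shift_def)
  have "shift n d ` UNIV \<union> {..<n + d} = UNIV"
    using new_or_shifted by blast
  moreover have "{..<n + d} \<union> shift n d ` {..<m} = {..<m + d}" if "n \<le> m" for m
  proof -
    have "x \<in> shift n d ` {..<m}" if "x < m + d" "\<not> x < n + d" for x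
      using that new_or_shifted[of x] by (intro image_eqI[of _ _ "x - d"]) auto
    with \<open>n \<le> m\<close> show ?thesis by (auto simp: shift_def)
  qed
  moreover have "ecar X = UNIV \<or> (\<exists>m. ecar X = {..<m} \<and> n \<le> m)"
    using assms lessThan_n_X unfolding enumerated_def by auto
  ultimately have "ecar (insert_block n d C B0 X) = UNIV \<or> (\<exists>m. ecar (insert_block n d C B0 X) = {..<m})"
    by (auto simp: Un_commute)
  then show ?thesis
    using E_B0 H_B0 copy_pairs enumerated_E[OF assms] enumerated_H[OF assms]
    unfolding enumerated_def by auto
qed

lemma restr_insert_block: "restr (insert_block n d C B0 X) (n + d) = B0"
proof -
  have "eE (insert_block n d C B0 X) \<inter> {..<n + d} \<times> {..<n + d} = eE B0"
    using E_B0 E_B0_iff by (auto simp: shift_less_iff_below shift_below shift_def)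
  moreover have "eH (insert_block n d C B0 X) \<inter> {..<n + d} \<times> {..<n + d} \<times> {..<n + d} = eH B0"
    using H_B0 H_B0_iff by (auto simp: shift_less_iff_below shift_below)
  ultimately show ?thesis using car_B0 by (auto simp: restr_def)
qed

lemma restr_insert_block_below: "v \<le> n \<Longrightarrow> restr (insert_block n d C B0 X) v = restr X v"
  by (metis le_add1 order_trans restr_B0 restr_X restr_insert_block restr_restr)

lemma insert_isolated_block_rels:
  assumes "C = {}" and isolated: "eE B0 \<subseteq> {..<n} \<times> {..<n}" "eH B0 \<subseteq> {..<n} \<times> {..<n} \<times> {..<n}"
  shows "eE (insert_block n d C B0 X) = map_prod (shift n d) (shift n d) ` eE X"
    and "eH (insert_block n d C B0 X) = (\<lambda>(a, b, c). (shift n d a, shift n d b, shift n d c)) ` eH X"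
proof -
  have "(p, q) \<in> map_prod (shift n d) (shift n d) ` eE X" if "(p, q) \<in> eE B0" for p q
  proof -
    from that isolated(1) have "p < n" "q < n" by auto
    with that E_B0_iff show ?thesis by (intro image_eqI[of _ _ "(p, q)"]) (auto simp: shift_below)
  qed
  then show "eE (insert_block n d C B0 X) = map_prod (shift n d) (shift n d) ` eE X"
    using \<open>C = {}\<close> by auto
  have "(p, q, r) \<in> (\<lambda>(a, b, c). (shift n d a, shift n d b, shift n d c)) ` eH X"
    if "(p, q, r) \<in> eH B0" for p q r
  proof -
    from that isolated(2) have "p < n" "q < n" "r < n" by auto
    with that H_B0_iff show ?thesis by (intro image_eqI[of _ _ "(p, q, r)"]) (auto simp: shift_below)
  qed
  then have "eH B0 \<subseteq> (\<lambda>(a, b, c). (shift n d a, shift n d b, shift n d c)) ` eH X" by auto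
  then show "eH (insert_block n d C B0 X) = (\<lambda>(a, b, c). (shift n d a, shift n d b, shift n d c)) ` eH X"
    unfolding insert_block_simps by (rule Un_absorb1)
qed

end

context
  fixes X :: estr and l :: nat and as0 :: "nat list"
  assumes X: "enumerated X" "init_seg A0 X" and n_le_l: "n \<le> l" and as0_ne: "as0 \<noteq> []"
    and as0: "\<forall>x\<in>set as0. l \<le> x \<and> x \<in> ecar X"
begin

lemma interp_in_ecar:
  assumes "proper l (length as0) \<phi>"
  shows "set_fact (map_fact (interp as0) \<phi>) \<subseteq> ecar X"
proof
  fix y assume "y \<in> set_fact (map_fact (interp as0) \<phi>)"
  then obtain a where a: "a \<in> set_fact \<phi>" "y = interp as0 a" by (auto simp: fact.set_map)
  have "hd as0 \<in> set as0" using as0_ne by simp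
  then have "{..<l} \<subseteq> ecar X"
    using as0 enumerated_lessThan_subset[OF X(1), of "hd as0"] by (meson lessThan_subset_iff order_trans)
  then show "y \<in> ecar X"
    by (cases a) (use a assms as0 in \<open>auto dest: proper_BsD proper_TvD\<close>)
qed

lemma interp_shift_Tv:
  assumes "i < length as0"
  shows "interp (map (shift n d) as0) (Tv i) = shift n d (as0 ! i)" "n + d \<le> shift n d (as0 ! i)"
proof -
  have "l \<le> as0 ! i" using as0 nth_mem[OF assms] by blast
  then show "interp (map (shift n d) as0) (Tv i) = shift n d (as0 ! i)" "n + d \<le> shift n d (as0 ! i)"
    using assms n_le_l by (auto simp: shift_def)
qed

lemma shift_type_tp_subset:
  "shift_type n d C (tp X l as0) \<subseteq> tp (insert_block n d C B0 X) (l + d) (map (shift n d) as0)"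
proof
  fix \<phi> assume "\<phi> \<in> shift_type n d C (tp X l as0)"
  then consider (old) \<phi>0 where "\<phi>0 \<in> tp X l as0" "\<phi> = map_fact (shift_atom n d) \<phi>0"
    | (new_below) j where "n \<le> j" "j < n + d" "\<phi> = FL (Bs j) (Tv 0)"
    | (copied) s t where "(s, t) \<in> C" "FE (Bs s) (Tv 0) \<in> tp X l as0" "\<phi> = FE (Bs t) (Tv 0)"
    unfolding shift_type_def inserted_facts_def by blast
  then show "\<phi> \<in> tp (insert_block n d C B0 X) (l + d) (map (shift n d) as0)"
  proof cases
    case old
    then have p0: "proper l (length as0) \<phi>0" and r0: "map_fact (interp as0) \<phi>0 \<in> rels_of X"
      by (auto simp: tp_def)
    have "map_fact (shift n d) (map_fact (interp as0) \<phi>0) \<in> rels_of (insert_block n d C B0 X)"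
      using insert_block_emb[OF X(2) interp_in_ecar[OF p0]] r0 by blast
    with old(2) show ?thesis
      using proper_shift_atom[OF p0 n_le_l] interp_shift_atom[of \<phi>0 as0] proper_TvD[OF p0]
      by (simp add: tp_def)
  next
    case new_below
    then show ?thesis
      using as0_ne interp_shift_Tv[of 0] n_le_l as0 by (auto simp: tp_def intro!: proper_FL)
  next
    case copied
    moreover have "as0 ! 0 \<in> set as0" using as0_ne by simp
    ultimately have "(s, as0 ! 0) \<in> eE X" "n \<le> as0 ! 0" "t < n + d"
      using as0 n_le_l copy_pairs by (auto simp: tp_def)
    with copied show ?thesis
      using as0_ne interp_shift_Tv[of 0] n_le_l
      by (auto simp: tp_def intro!: proper_FE)
  qed
qed

lemma tp_insert_block_old_fact:
  assumes \<phi>: "\<phi> \<in> tp (insert_block n d C B0 X) (l + d) (map (shift n d) as0)"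
    and old: "\<And>j. Bs j \<in> set_fact \<phi> \<Longrightarrow> j < n \<or> n + d \<le> j"
  shows "\<phi> \<in> map_fact (shift_atom n d) ` tp X l as0"
proof -
  let ?\<phi>0 = "map_fact (unshift_atom n d) \<phi>"
  have p: "proper (l + d) (length as0) \<phi>"
    and r: "map_fact (interp (map (shift n d) as0)) \<phi> \<in> rels_of (insert_block n d C B0 X)"
    using \<phi> by (auto simp: tp_def)
  have \<phi>0: "map_fact (shift_atom n d) ?\<phi>0 = \<phi>" by (rule map_fact_unshift_atom[OF old])
  have p0: "proper l (length as0) ?\<phi>0" by (rule proper_unshift_atom[OF p n_le_l old])
  have "map_fact (shift n d) (map_fact (interp as0) ?\<phi>0) \<in> rels_of (insert_block n d C B0 X)"
    using r \<phi>0 interp_shift_atom[of ?\<phi>0 as0 n d] proper_TvD[OF p0] by simp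
  then have "?\<phi>0 \<in> tp X l as0"
    using insert_block_emb[OF X(2) interp_in_ecar[OF p0]] p0 by (simp add: tp_def)
  with \<phi>0 show ?thesis by (metis imageI)
qed

lemma tp_insert_block_new_edge:
  assumes \<phi>: "FE a b \<in> tp (insert_block n d C B0 X) (l + d) (map (shift n d) as0)"
    and j0: "n \<le> j0" "j0 < n + d" and ab: "(a = Tv 0 \<and> b = Bs j0) \<or> (a = Bs j0 \<and> b = Tv 0)"
  shows "FE a b \<in> inserted_facts n d C (tp X l as0)"
proof -
  let ?ia = "interp (map (shift n d) as0)"
  have L0: "0 < length as0" using as0_ne by simp
  note ia0 = interp_shift_Tv[OF L0]
  have "(?ia a, ?ia b) \<in> eE (insert_block n d C B0 X)" using \<phi> by (simp add: tp_def)
  then consider "(?ia a, ?ia b) \<in> eE B0"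
    | x y where "?ia a = shift n d x" "?ia b = shift n d y"
    | s x where "(s, ?ia a) \<in> C" "(s, x) \<in> eE X" "n \<le> x" "?ia b = shift n d x"
    by auto
  then show ?thesis
  proof cases
    case 1
    then show ?thesis using ab ia0 E_B0 by auto
  next
    case 2
    then have "j0 = shift n d x \<or> j0 = shift n d y" using ab by auto
    then show ?thesis using j0 shift_not_new by metis
  next
    case 3
    then have "?ia a < n + d" using copy_pairs by auto
    then have "a = Bs j0" "b = Tv 0" using ab ia0 by auto
    with 3 have "x = as0 ! 0" "(s, j0) \<in> C" using ia0 by auto
    with 3 have "FE (Bs s) (Tv 0) \<in> tp X l as0"
      using copy_pairs n_le_l L0 by (auto simp: tp_def intro!: proper_FE)
    with \<open>(s, j0) \<in> C\<close> \<open>a = Bs j0\<close> \<open>b = Tv 0\<close> show ?thesis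
      unfolding inserted_facts_def by blast
  qed
qed

lemma tp_insert_block_new_fact:
  assumes \<phi>: "\<phi> \<in> tp (insert_block n d C B0 X) (l + d) (map (shift n d) as0)"
    and j0: "n \<le> j0" "j0 < n + d" "Bs j0 \<in> set_fact \<phi>"
  shows "\<phi> \<in> inserted_facts n d C (tp X l as0)"
proof -
  let ?ia = "interp (map (shift n d) as0)"
  have p: "proper (l + d) (length as0) \<phi>" and r: "map_fact ?ia \<phi> \<in> rels_of (insert_block n d C B0 X)"
    using \<phi> by (auto simp: tp_def)
  have T0: "Tv 0 \<in> set_fact \<phi>" by (rule proper_Tv0[OF p])
  note ia0 = interp_shift_Tv[of 0]
  show ?thesis
  proof (cases \<phi>)
    case (FE a b)
    then have "(a = Tv 0 \<and> b = Bs j0) \<or> (a = Bs j0 \<and> b = Tv 0)" using T0 j0(3) by auto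
    with FE \<phi> show ?thesis using tp_insert_block_new_edge j0(1,2) by blast
  next
    case (FH a b c)
    have "(?ia a, ?ia b, ?ia c) \<in> eH (insert_block n d C B0 X)" using r FH by simp
    then consider "(?ia a, ?ia b, ?ia c) \<in> eH B0"
      | x y z where "?ia a = shift n d x" "?ia b = shift n d y" "?ia c = shift n d z"
      by auto
    then show ?thesis
    proof cases
      case 1
      then have "?ia a < n + d" "?ia b < n + d" "?ia c < n + d" using H_B0 by auto
      then show ?thesis using FH T0 ia0 as0_ne by auto
    next
      case 2
      then have "j0 = shift n d x \<or> j0 = shift n d y \<or> j0 = shift n d z" using FH j0(3) by auto
      then show ?thesis using j0 shift_not_new by metis
    qed
  next
    case (FL a b)
    then have "(a = Tv 0 \<and> b = Bs j0) \<or> (a = Bs j0 \<and> b = Tv 0)" using T0 j0(3) by auto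
    moreover have "?ia a \<le> ?ia b" using r FL by simp
    ultimately have "a = Bs j0 \<and> b = Tv 0" using ia0 as0_ne j0 by auto
    then show ?thesis using FL j0 by (auto simp: inserted_facts_def)
  qed
qed

lemma tp_insert_block:
  "tp (insert_block n d C B0 X) (l + d) (map (shift n d) as0) = shift_type n d C (tp X l as0)"
proof (rule subset_antisym[OF subsetI shift_type_tp_subset])
  fix \<phi> assume \<phi>: "\<phi> \<in> tp (insert_block n d C B0 X) (l + d) (map (shift n d) as0)"
  show "\<phi> \<in> shift_type n d C (tp X l as0)"
  proof (cases "\<exists>j. n \<le> j \<and> j < n + d \<and> Bs j \<in> set_fact \<phi>")
    case True
    then show ?thesis using tp_insert_block_new_fact[OF \<phi>] unfolding shift_type_def by blast
  next
    case False
    then have "\<phi> \<in> map_fact (shift_atom n d) ` tp X l as0"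
      by (intro tp_insert_block_old_fact[OF \<phi>]) (meson not_le)
    then show ?thesis unfolding shift_type_def by blast
  qed
qed

end

lemma tp_insert_block_in_image:
  assumes X: "enumerated X" "init_seg A0 X" and n_le_v: "n \<le> v" and Z: "card (ecar Z) = v"
    and as: "as \<noteq> []" "set as \<subseteq> shift n d ` ecar X" "\<forall>a\<in>set as. v + d \<le> a"
  shows "PT (length as - 1) (tp (insert_block n d C B0 X) (v + d) as) \<in> shift_plus n d C ` plus_car Z"
proof -
  obtain as0 where as0: "as = map (shift n d) as0" "\<forall>x\<in>set as0. v \<le> x \<and> x \<in> ecar X"
    using shifted_list_obtain[OF n_le_v as(2,3)] .
  with as(1) have "as0 \<noteq> []" by auto
  then have "PT (length as0 - 1) (tp X v as0) \<in> plus_car Z"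
    and "tp (insert_block n d C B0 X) (v + d) as = shift_type n d C (tp X v as0)"
    using tp_in_plus_car[OF _ Z] tp_insert_block[OF X n_le_v _ as0(2)] as0(1) by auto
  then show ?thesis using as0(1) by (metis shift_plus.simps(2) image_eqI length_map)
qed

lemma is_emb_restr_insert_block:
  assumes X: "enumerated X" "init_seg A0 X" and v: "v \<in> ecar X" "n \<le> v"
  shows "is_emb (plus (restr X v)) (plus (restr (insert_block n d C B0 X) (v + d))) (shift_plus n d C)"
proof (rule is_emb_shift_plus)
  let ?Y = "insert_block n d C B0 X"
  show car_v: "ecar (restr X v) = {..<v}" by (rule enumerated_restr_car[OF X(1) v(1)])
  show "eE (restr X v) \<subseteq> ecar (restr X v) \<times> ecar (restr X v)"
    and "eH (restr X v) \<subseteq> ecar (restr X v) \<times> ecar (restr X v) \<times> ecar (restr X v)"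
    using enumerated_E[OF X(1)] enumerated_H[OF X(1)] by auto
  have "v + d \<in> ecar ?Y" using v by (force simp: shift_def)
  then show "ecar (restr ?Y (v + d)) = {..<v + d}"
    by (rule enumerated_restr_car[OF enumerated_insert_block[OF X(2) X(1)]])
  show "n \<le> v" by (rule v(2))
  show "snd ` C \<subseteq> {n..<n + d}" by (rule snd_copy_pairs)
  fix \<phi> assume "set_fact \<phi> \<subseteq> ecar (restr X v)"
  then have "set_fact \<phi> \<subseteq> {..<v}" "set_fact \<phi> \<subseteq> ecar X"
    using car_v by auto
  moreover from this(1) have "set_fact (map_fact (shift n d) \<phi>) \<subseteq> {..<v + d}"
    using v(2) by (auto simp: fact.set_map shift_less_add_iff)
  ultimately show "\<phi> \<in> rels_of (restr X v) \<longleftrightarrow> map_fact (shift n d) \<phi> \<in> rels_of (restr ?Y (v + d))"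
    unfolding rels_of_restr using insert_block_emb[OF X(2)] by auto
qed

lemma insert_block_type_respecting_at:
  assumes X: "enumerated X" "init_seg A0 X" and v: "v \<in> ecar X"
  shows "\<exists>hv. is_emb (plus (restr X v)) (plus (restr (insert_block n d C B0 X) (shift n d v))) hv \<and>
    (\<forall>as. as \<noteq> [] \<and> sorted_wrt (<) as \<and> set as \<subseteq> shift n d ` ecar X \<and> (\<forall>a\<in>set as. shift n d v \<le> a)
       \<longrightarrow> PT (length as - 1) (tp (insert_block n d C B0 X) (shift n d v) as) \<in> hv ` plus_car (restr X v))"
proof (cases "v < n")
  case True
  then have "restr (insert_block n d C B0 X) (shift n d v) = restr X v"
    using restr_insert_block_below[OF X(2)] by (simp add: shift_below)
  moreover have "card (ecar (restr X v)) = shift n d v"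
    using enumerated_restr_car[OF X(1) v] True by (simp add: shift_below)
  ultimately show ?thesis
    using is_emb_id tp_in_plus_car by (intro exI[of _ id]) (simp del: plus_car_PT)
next
  case False
  then have "shift n d v = v + d" by (simp add: shift_def)
  moreover have "card (ecar (restr X v)) = v"
    using enumerated_restr_car[OF X(1) v] by simp
  ultimately show ?thesis
    using is_emb_restr_insert_block[OF X v] False tp_insert_block_in_image[OF X] by auto
qed

lemma tr_emb_insert_block:
  assumes X: "enumerated X" "init_seg A0 X"
  shows "tr_emb X (insert_block n d C B0 X) (shift n d)"
proof -
  have "emb_e X (insert_block n d C B0 X) (shift n d)"
    unfolding emb_e_def using insert_block_emb[OF X(2)] by (auto simp: inj_on_def)
  then show ?thesis
    unfolding tr_emb_def using insert_block_type_respecting_at[OF X] by blast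
qed

lemma is_emb_plus_A0_B0: "is_emb (plus A0) (plus B0) (shift_plus n d C)"
proof (rule is_emb_shift_plus)
  have rels_A0: "eE A0 = eE B0 \<inter> {..<n} \<times> {..<n}" "eH A0 = eH B0 \<inter> {..<n} \<times> {..<n} \<times> {..<n}"
    using restr_B0 by auto
  show "ecar A0 = {..<n}" by (rule car_A0)
  show "eE A0 \<subseteq> ecar A0 \<times> ecar A0" "eH A0 \<subseteq> ecar A0 \<times> ecar A0 \<times> ecar A0"
    using rels_A0 car_A0 by auto
  show "ecar B0 = {..<n + d}" by (rule car_B0)
  show "n \<le> n" by simp
  show "snd ` C \<subseteq> {n..<n + d}" by (rule snd_copy_pairs)
  fix \<phi> assume "set_fact \<phi> \<subseteq> ecar A0"
  then have "set_fact \<phi> \<subseteq> {..<n}" and "map_fact (shift n d) \<phi> = \<phi>"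
    using car_A0 by (auto intro!: map_fact_cong_id simp: shift_below)
  then show "\<phi> \<in> rels_of A0 \<longleftrightarrow> map_fact (shift n d) \<phi> \<in> rels_of B0"
    using rels_of_restr[of B0 n] restr_B0 by auto
qed

lemma trp_shift_plus:
  assumes P: "\<And>X. enumerated X \<Longrightarrow> P X \<Longrightarrow> init_seg A0 X \<Longrightarrow> P (insert_block n d C B0 X)"
  shows "trp P A0 B0 (shift_plus n d C)"
proof -
  have card_B0: "card (ecar B0) = n + d" and card_A0: "card (ecar A0) = n"
    using car_A0 car_B0 by simp_all
  have init_seg: "init_seg B0 (insert_block n d C B0 X)" if "init_seg A0 X" for X
    unfolding init_seg_def using car_B0 card_B0 restr_insert_block[OF that] by auto
  show ?thesis
    by (rule trpI[where ext = "insert_block n d C B0" and emb = "\<lambda>_. shift n d", OF is_emb_plus_A0_B0])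
       (use P init_seg enumerated_insert_block tr_emb_insert_block
          tp_insert_block_in_image[OF _ _ order_refl card_A0] card_B0 in auto)
qed

end

section \<open>Base-fixing embeddings and weak types\<close>

lemma is_emb_plus_PT0_preimage:
  assumes h: "is_emb (plus X) (plus Y) h" and p: "p \<in> plus_car X" and hp: "h p = PT 0 R"
  obtains T where "p = PT 0 T"
proof (cases p)
  case (PB j)
  then have "plus_fn (h p) = None" using h p unfolding is_emb_def plus_def by simp
  with hp show thesis by simp
next
  case (PT i T)
  show thesis
  proof (cases i)
    case 0
    with PT that show thesis by simp
  next
    case (Suc k)
    let ?q = "PT k (trunc (Suc k) T)"
    have "Some (h ?q) = plus_fn (h p)" using h p PT Suc unfolding is_emb_def plus_def by simp
    also have "\<dots> = Some (h p)" using hp by simp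
    finally have "h ?q = h p" by simp
    moreover have "?q \<in> plus_car X"
      using p PT Suc by (auto simp: trunc_def intro: proper_trunc)
    ultimately have "?q = p" using h p unfolding is_emb_def plus_def by (auto dest: inj_onD)
    with PT Suc show thesis by simp
  qed
qed

lemma is_emb_plus_type_agree:
  assumes h: "is_emb (plus X) (plus Y) h" and fix_base: "\<forall>b\<in>ecar X. h (PB b) = PB b"
    and car: "ecar X = {..<l}" "ecar Y = {..<l'}" "l \<le> l'"
    and T: "PT 0 T \<in> plus_car X" and R: "PT 0 R \<in> plus_car Y" and hT: "h (PT 0 T) = PT 0 R"
    and \<phi>: "proper l 1 \<phi>"
  shows "\<phi> \<in> T \<longleftrightarrow> \<phi> \<in> R"
proof -
  have T': "T \<subseteq> Collect (proper l 1)" and R': "R \<subseteq> Collect (proper l' 1)"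
    using T R car by simp_all
  have atoms: "(\<exists>j. a = Bs j \<and> j < l) \<or> a = Tv 0" if "a \<in> set_fact \<phi>" for a
    by (cases a) (use that proper_BsD[OF \<phi>] proper_TvD[OF \<phi>] in auto)
  have "sig T a \<in> plus_car X" if "a \<in> set_fact \<phi>" for a
    using atoms[OF that] T car trunc_proper[OF T'] by auto
  then have "set_fact (map_fact (sig T) \<phi>) \<subseteq> plus_car X"
    by (auto simp: fact.set_map)
  then have "map_fact (sig T) \<phi> \<in> plus_rels X \<longleftrightarrow> map_fact h (map_fact (sig T) \<phi>) \<in> plus_rels Y"
    using h unfolding is_emb_def plus_def by simp
  also have "map_fact h (map_fact (sig T) \<phi>) = map_fact (sig R) \<phi>"
    unfolding fact.map_comp
  proof (rule fact.map_cong[OF refl])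
    show "(h \<circ> sig T) a = sig R a" if "a \<in> set_fact \<phi>" for a
      using atoms[OF that] fix_base car hT trunc_proper[OF T'] trunc_proper[OF R'] by auto
  qed
  finally show ?thesis
    using sig_in_plus_rels_iff[of T X 1 \<phi>] sig_in_plus_rels_iff[of R Y 1 \<phi>] T' R' \<phi> car
      proper_mono[OF \<phi> car(3)] by simp
qed

lemma is_emb_plus_preimage_tp:
  assumes h: "is_emb (plus X) (plus Y) h" and fix_base: "\<forall>b\<in>ecar X. h (PB b) = PB b"
    and car: "ecar X = {..<l}" "ecar Y = {..<l'}" "l \<le> l'"
    and T: "PT 0 T \<in> plus_car X" and hT: "h (PT 0 T) = PT 0 (tp B l' [y])"
  shows "T = tp B l [y]"
proof (rule set_eqI)
  have R: "PT 0 (tp B l' [y]) \<in> plus_car Y" using tp_proper[of B l' "[y]"] car by simp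
  fix \<phi>
  show "\<phi> \<in> T \<longleftrightarrow> \<phi> \<in> tp B l [y]"
  proof (cases "proper l 1 \<phi>")
    case True
    then have "\<phi> \<in> T \<longleftrightarrow> \<phi> \<in> tp B l' [y]" by (rule is_emb_plus_type_agree[OF h fix_base car T R hT])
    also have "\<dots> \<longleftrightarrow> \<phi> \<in> tp B l [y]" using True proper_mono[OF True car(3)] by (simp add: tp_def)
    finally show ?thesis .
  next
    case False
    then show ?thesis using T car by (auto simp: tp_def)
  qed
qed

lemma tp_emb_e:
  assumes h: "emb_e A B h" and fix_base: "\<And>j. j < l \<Longrightarrow> h j = j"
    and "{..<l} \<subseteq> ecar A" "set as \<subseteq> ecar A"
  shows "tp B l (map h as) = tp A l as"
proof -
  have "map_fact (interp as) \<phi> \<in> rels_of A \<longleftrightarrow> map_fact (interp (map h as)) \<phi> \<in> rels_of B"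
    if "proper l (length as) \<phi>" for \<phi>
  proof -
    have atoms: "(\<exists>j. a = Bs j \<and> j < l) \<or> (\<exists>i. a = Tv i \<and> i < length as)" if "a \<in> set_fact \<phi>" for a
      by (cases a) (use that proper_BsD[OF \<open>proper l _ \<phi>\<close>] proper_TvD[OF \<open>proper l _ \<phi>\<close>] in auto)
    have "map_fact (interp (map h as)) \<phi> = map_fact (h \<circ> interp as) \<phi>"
    proof (rule fact.map_cong[OF refl])
      show "interp (map h as) a = (h \<circ> interp as) a" if "a \<in> set_fact \<phi>" for a
        using atoms[OF that] fix_base by auto
    qed
    then have "map_fact (interp (map h as)) \<phi> = map_fact h (map_fact (interp as) \<phi>)"
      by (simp add: fact.map_comp)
    moreover have "set_fact (map_fact (interp as) \<phi>) \<subseteq> ecar A"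
      using atoms assms(3,4) by (fastforce simp: fact.set_map)
    ultimately show ?thesis using h unfolding emb_e_def by simp
  qed
  then show ?thesis by (auto simp: tp_def)
qed

section \<open>The counterexample\<close>

lemma mono_EH_FD:
  assumes "mono_EH F X m"
  shows "(m 1, m 0) \<in> eE X" "(m 1, m 2) \<in> eE X" "(m 1, m 3) \<in> eE X" "(m 0, m 2, m 3) \<in> eH X"
    and "m 0 \<noteq> m 2" "m 0 \<noteq> m 3" "m 2 \<noteq> m 3" "m 1 \<noteq> m 0" "m 1 \<noteq> m 2" "m 1 \<noteq> m 3"
  using assms unfolding mono_EH_def F_def inj_on_def by auto

lemma mono_EH_FI:
  assumes "enumerated X"
    and "(m 1, m 0) \<in> eE X" "(m 1, m 2) \<in> eE X" "(m 1, m 3) \<in> eE X" "(m 0, m 2, m 3) \<in> eH X"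
    and "m 0 \<noteq> m 2" "m 0 \<noteq> m 3" "m 2 \<noteq> m 3" "m 1 \<noteq> m 0" "m 1 \<noteq> m 2" "m 1 \<noteq> m 3"
  shows "mono_EH F X m"
  using assms enumerated_E[OF assms(1)] unfolding mono_EH_def F_def inj_on_def by auto

lemma insert_isolated_block_in_K:
  assumes "block_insertion n d {} A0 B0"
    and isolated: "eE B0 \<subseteq> {..<n} \<times> {..<n}" "eH B0 \<subseteq> {..<n} \<times> {..<n} \<times> {..<n}"
    and X: "enumerated X" "X \<in> K" "init_seg A0 X"
  shows "insert_block n d {} B0 X \<in> K"
proof -
  interpret block_insertion n d "{}" A0 B0 by fact
  have "\<not> mono_EH F (insert_block n d {} B0 X) m" for m
  proof
    assume "mono_EH F (insert_block n d {} B0 X) m"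
    note m = mono_EH_FD[OF this, unfolded insert_isolated_block_rels[OF X(3) refl isolated]]
    obtain a1 a0 where 1: "(a1, a0) \<in> eE X" "m 1 = shift n d a1" "m 0 = shift n d a0" using m(1) by auto
    obtain b1 a2 where 2: "(b1, a2) \<in> eE X" "m 1 = shift n d b1" "m 2 = shift n d a2" using m(2) by auto
    obtain c1 a3 where 3: "(c1, a3) \<in> eE X" "m 1 = shift n d c1" "m 3 = shift n d a3" using m(3) by auto
    obtain x y z where 4: "(x, y, z) \<in> eH X" "m 0 = shift n d x" "m 2 = shift n d y" "m 3 = shift n d z"
      using m(4) by auto
    have "mono_EH F X (\<lambda>k. unshift n d (m k))"
      by (rule mono_EH_FI) (use 1 2 3 4 m X(1) in auto)
    with X(2) show False unfolding K_def by blast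
  qed
  then show ?thesis using enumerated_insert_block[OF X(3,1)] unfolding K_def by blast
qed

definition cex_A :: estr where "cex_A = \<lparr>ecar = {..<1}, eE = {}, eH = {}\<rparr>"
definition cex_B :: estr where "cex_B = \<lparr>ecar = {..<2}, eE = {}, eH = {}\<rparr>"
definition cex_B' :: estr where "cex_B' = \<lparr>ecar = {..<3}, eE = {(2, 1)}, eH = {}\<rparr>"
definition cex_W :: estr where "cex_W = \<lparr>ecar = {..<4}, eE = {(0, 2), (0, 3)}, eH = {(1, 2, 3)}\<rparr>"

abbreviation cex_f :: "pv \<Rightarrow> pv" where "cex_f \<equiv> shift_plus 1 1 {}"
abbreviation cex_f' :: "pv \<Rightarrow> pv" where "cex_f' \<equiv> shift_plus 1 2 {(0, 2)}"
abbreviation cex_g :: "pv \<Rightarrow> pv" where "cex_g \<equiv> shift_plus 2 1 {(0, 2)}"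

lemma cex_in_K: "cex_A \<in> K" "cex_B \<in> K" "cex_B' \<in> K" "cex_W \<in> K"
proof -
  have "\<not> mono_EH F X m" if "eE X \<subseteq> {(0, 2), (0, 3), (2, 1)}" "eH X \<subseteq> {(1, 2, 3)}" for X m
  proof
    assume "mono_EH F X m"
    note m = mono_EH_FD[OF this]
    from m(4) that(2) have "m 0 = 1" "m 2 = 2" by auto
    with m(1) that(1) have "m 1 = 2" by auto
    with m(2) that(1) \<open>m 2 = 2\<close> show False by auto
  qed
  then show "cex_A \<in> K" "cex_B \<in> K" "cex_B' \<in> K" "cex_W \<in> K"
    unfolding K_def cex_A_def cex_B_def cex_B'_def cex_W_def by (auto simp: enumerated_lessThan_iff)
qed

lemma block_insertion_cex_f: "block_insertion 1 1 {} cex_A cex_B"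
  and block_insertion_cex_f': "block_insertion 1 2 {(0, 2)} cex_A cex_B'"
  and block_insertion_cex_g: "block_insertion 2 1 {(0, 2)} cex_B cex_B'"
  by unfold_locales (auto simp: cex_A_def cex_B_def cex_B'_def enumerated_lessThan_iff restr_def)

lemma mono_EH_F_insert_block_cex_f':
  assumes X: "enumerated X" and m: "mono_EH F (insert_block 1 2 {(0, 2)} cex_B' X) m"
  shows "\<exists>m'. mono_EH F X m'"
proof -
  let ?Y = "insert_block 1 2 {(0, 2)} cex_B' X"
  note m = mono_EH_FD[OF m]
  have "\<exists>a b c. (a, b, c) \<in> eH X \<and> p = shift 1 2 a \<and> q = shift 1 2 b \<and> r = shift 1 2 c"
    if "(p, q, r) \<in> eH ?Y" for p q r
    using that by (auto simp: cex_B'_def)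
  then obtain a0 a2 a3
    where a: "(a0, a2, a3) \<in> eH X" "m 0 = shift 1 2 a0" "m 2 = shift 1 2 a2" "m 3 = shift 1 2 a3"
    using m(4) by blast
  have E: "(p = 2 \<and> q = 1) \<or> (\<exists>a b. (a, b) \<in> eE X \<and> p = shift 1 2 a \<and> q = shift 1 2 b)
     \<or> (\<exists>x. p = 2 \<and> q = shift 1 2 x \<and> (0, x) \<in> eE X \<and> 1 \<le> x)" if "(p, q) \<in> eE ?Y" for p q
    using that by (auto simp: cex_B'_def)
  have shift_ne: "shift 1 2 x \<noteq> 2" "shift 1 2 x \<noteq> 1" for x by (auto simp: shift_def)
  have distinct: "a0 \<noteq> a2" "a0 \<noteq> a3" "a2 \<noteq> a3" using m(5-7) a by auto
  show ?thesis
  proof (cases "\<exists>c. m 1 = shift 1 2 c")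
    case True
    then obtain c where c: "m 1 = shift 1 2 c" by blast
    have edge: "(c, a) \<in> eE X" if "(m 1, shift 1 2 a) \<in> eE ?Y" for a
      using E[OF that] c shift_ne by auto
    have "c \<noteq> a0" "c \<noteq> a2" "c \<noteq> a3" using m(8-10) a c by auto
    then have "mono_EH F X (\<lambda>k. if k = 1 then c else unshift 1 2 (m k))"
      using edge[of a0] edge[of a2] edge[of a3] m(1-3) distinct a X by (intro mono_EH_FI) auto
    then show ?thesis by blast
  next
    case False
    txt \<open>The centre of the copy of F is the new vertex 2, whose out-neighbours beyond 1 are
      copied from vertex 0; so 0 can take its place.\<close>
    then have "m 1 = 2" using E[OF m(1)] by auto
    then have edge: "(0, a) \<in> eE X \<and> 1 \<le> a" if "(m 1, shift 1 2 a) \<in> eE ?Y" for a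
      using E[OF that] shift_ne False by auto
    have "mono_EH F X (\<lambda>k. if k = 1 then 0 else unshift 1 2 (m k))"
      using edge[of a0] edge[of a2] edge[of a3] m(1-3) distinct a X by (intro mono_EH_FI) auto
    then show ?thesis by blast
  qed
qed

lemma insert_block_cex_f'_in_K:
  assumes "enumerated X" "X \<in> K" "init_seg cex_A X"
  shows "insert_block 1 2 {(0, 2)} cex_B' X \<in> K"
  using assms mono_EH_F_insert_block_cex_f' block_insertion.enumerated_insert_block[OF block_insertion_cex_f']
  unfolding K_def by blast

lemma trp_cex_f: "trp (\<lambda>X. X \<in> K) cex_A cex_B cex_f"
  by (rule block_insertion.trp_shift_plus[OF block_insertion_cex_f])
     (rule insert_isolated_block_in_K[OF block_insertion_cex_f], auto simp: cex_B_def)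

lemma trp_cex_f': "trp (\<lambda>X. X \<in> K) cex_A cex_B' cex_f'"
  by (rule block_insertion.trp_shift_plus[OF block_insertion_cex_f']) (rule insert_block_cex_f'_in_K)

lemma trp_cex_g: "trp (\<lambda>_. True) cex_B cex_B' cex_g"
  by (rule block_insertion.trp_shift_plus[OF block_insertion_cex_g]) simp

lemma cex_g_cex_f: "cex_g (cex_f x) = cex_f' x"
  using shift_plus_shift_plus[of "{}" 1 1 "{(0, 2)}" 1 x] by (simp only: one_add_one Un_empty_left) simp

lemma tp_cex_W:
  assumes "x = 2 \<or> x = 3"
  shows "tp cex_W 2 [x] = {FE (Bs 0) (Tv 0), FL (Bs 0) (Tv 0), FL (Bs 1) (Tv 0)}"
proof (intro set_eqI iffI)
  fix \<phi> assume "\<phi> \<in> tp cex_W 2 [x]"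
  then have \<phi>: "proper 2 1 \<phi>" "map_fact (interp [x]) \<phi> \<in> rels_of cex_W"
    by (auto simp: tp_def)
  have atoms: "\<forall>a\<in>set_fact \<phi>. a = Bs 0 \<or> a = Bs 1 \<or> a = Tv 0"
  proof
    show "a = Bs 0 \<or> a = Bs 1 \<or> a = Tv 0" if "a \<in> set_fact \<phi>" for a
      by (cases a) (use that proper_BsD[OF \<phi>(1)] proper_TvD[OF \<phi>(1)] in \<open>auto simp: less_2_cases_iff\<close>)
  qed
  moreover have "Tv 0 \<in> set_fact \<phi>" "\<exists>j. Bs j \<in> set_fact \<phi>"
    using \<phi>(1) proper_Tv0 unfolding proper_def by blast+
  ultimately show "\<phi> \<in> {FE (Bs 0) (Tv 0), FL (Bs 0) (Tv 0), FL (Bs 1) (Tv 0)}"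
    using \<phi>(2) assms by (cases \<phi>) (auto simp: cex_W_def)
next
  fix \<phi> assume "\<phi> \<in> {FE (Bs 0) (Tv 0), FL (Bs 0) (Tv 0), FL (Bs 1) (Tv 0)}"
  then show "\<phi> \<in> tp cex_W 2 [x]"
    using assms by (auto simp: tp_def cex_W_def intro: proper_FE proper_FL)
qed

lemma cex_W_extension:
  assumes B'': "init_seg cex_B' B''" and g0: "emb_e cex_W B'' g0" "g0 0 = 0" "g0 1 = 1"
  shows "(2, 1) \<in> eE B''" "(1, g0 2, g0 3) \<in> eH B''" "3 \<le> g0 2" "g0 2 < g0 3"
proof -
  have rels: "\<phi> \<in> rels_of cex_W \<longleftrightarrow> map_fact g0 \<phi> \<in> rels_of B''" if "set_fact \<phi> \<subseteq> {..<4}" for \<phi>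
    using g0(1) that unfolding emb_e_def by (auto simp: cex_W_def)
  have inj: "inj_on g0 {..<4}" using g0(1) unfolding emb_e_def by (auto simp: cex_W_def)
  have "restr B'' 3 = cex_B'" using B'' unfolding init_seg_def by (simp add: cex_B'_def)
  from arg_cong[OF this, of eE] have E_below_3: "eE B'' \<inter> {..<3} \<times> {..<3} = {(2, 1)}"
    by (simp add: cex_B'_def)
  then show "(2, 1) \<in> eE B''" by blast
  show "(1, g0 2, g0 3) \<in> eH B''" using rels[of "FH 1 2 3"] g0(3) by (simp add: cex_W_def)
  have "(0, g0 2) \<in> eE B''" using rels[of "FE 0 2"] g0(2) by (simp add: cex_W_def)
  moreover have "(0, 2) \<notin> eE B'' \<inter> {..<3} \<times> {..<3}" unfolding E_below_3 by simp
  ultimately have "g0 2 \<noteq> 2" by auto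
  moreover have "1 \<le> g0 2" "g0 2 \<le> g0 3"
    using rels[of "FL 1 2"] rels[of "FL 2 3"] g0(3) by (simp_all add: cex_W_def)
  moreover have "g0 2 \<noteq> 1" "g0 2 \<noteq> g0 3"
    using inj_onD[OF inj, of 2 1] inj_onD[OF inj, of 2 3] g0(3) by auto
  ultimately show "3 \<le> g0 2" "g0 2 < g0 3" by auto
qed

lemma cex_copied_edge:
  assumes g': "is_emb (plus cex_B) (plus cex_B') g'"
    and agree: "\<forall>x\<in>plus_car cex_A. g' (cex_f x) = cex_f' x"
    and fix_base: "\<forall>b\<in>ecar cex_B. g' (PB b) = PB b"
    and g0: "emb_e cex_W B'' g0" "g0 0 = 0" "g0 1 = 1"
    and x: "x = 2 \<or> x = 3"
    and type_in_image: "PT 0 (tp B'' 3 [g0 x]) \<in> g' ` plus_car cex_B"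
  shows "(2, g0 x) \<in> eE B''"
proof -
  define U where "U = {FE (Bs 0) (Tv 0), FL (Bs 0) (Tv 0)}"
  have car_B: "ecar cex_B = {..<2}" and car_B': "ecar cex_B' = {..<3}"
    by (simp_all add: cex_B_def cex_B'_def)
  obtain p where p: "p \<in> plus_car cex_B" "g' p = PT 0 (tp B'' 3 [g0 x])" using type_in_image by auto
  then obtain T where T: "p = PT 0 T" using is_emb_plus_PT0_preimage[OF g'] by blast
  have "T = tp B'' 2 [g0 x]"
    using is_emb_plus_preimage_tp[OF g' fix_base car_B car_B'] p T by simp
  also have "\<dots> = tp cex_W 2 [x]"
  proof -
    have "g0 j = j" if "j < 2" for j using that g0(2,3) by (auto simp: less_2_cases_iff)
    with x show ?thesis using tp_emb_e[OF g0(1), of 2 "[x]"] by (auto simp: cex_W_def)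
  qed
  also have "\<dots> = shift_type 1 1 {} U"
  proof -
    have "{FL (Bs j) (Tv 0) | j. 1 \<le> j \<and> j < 1 + 1} = {FL (Bs 1) (Tv 0)}" by auto
    then show ?thesis
      unfolding tp_cex_W[OF x] shift_type_def inserted_facts_def U_def by (auto simp: shift_def)
  qed
  finally have "p = cex_f (PT 0 U)" using T by simp
  moreover have "PT 0 U \<in> plus_car cex_A"
    by (auto simp: U_def cex_A_def intro: proper_FE proper_FL)
  ultimately have "PT 0 (tp B'' 3 [g0 x]) = cex_f' (PT 0 U)" using p(2) agree by metis
  then have "FE (Bs 2) (Tv 0) \<in> tp B'' 3 [g0 x]" by (auto simp: U_def shift_type_def inserted_facts_def)
  then show ?thesis by (simp add: tp_def)
qed

lemma cex_amalgamation_fails: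
  assumes tr: "trp (\<lambda>X. X \<in> K) cex_B cex_B' g'"
    and agree: "\<forall>x\<in>plus_car cex_A. g' (cex_f x) = cex_f' x"
    and fix_base: "\<forall>b\<in>ecar cex_B. g' (PB b) = PB b"
  shows False
proof -
  have "enumerated cex_W \<and> cex_W \<in> K \<and> init_seg cex_B cex_W"
    using cex_in_K(4) unfolding K_def by (auto simp: init_seg_def cex_B_def cex_W_def restr_def)
  then obtain B'' g0 where B'': "enumerated B''" "B'' \<in> K" "init_seg cex_B' B''" "tr_emb cex_W B'' g0"
      "\<forall>a\<in>ecar cex_B. PB (g0 a) = g' (PB a)"
    and types: "\<forall>as. as \<noteq> [] \<and> sorted_wrt (<) as \<and> set as \<subseteq> g0 ` ecar cex_W \<and>
        (\<forall>a\<in>set as. card (ecar cex_B') \<le> a) \<longrightarrow>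
        PT (length as - 1) (tp B'' (card (ecar cex_B')) as) \<in> g' ` plus_car cex_B"
    using tr unfolding trp_def by blast
  have g0: "emb_e cex_W B'' g0" "g0 0 = 0" "g0 1 = 1"
    using B''(4,5) fix_base unfolding tr_emb_def by (auto simp: cex_B_def)
  note W = cex_W_extension[OF B''(3) g0]
  have "(2, g0 x) \<in> eE B''" if "x = 2 \<or> x = 3" for x
  proof (rule cex_copied_edge[OF _ agree fix_base g0 that])
    show "is_emb (plus cex_B) (plus cex_B') g'" using tr unfolding trp_def by blast
    have "3 \<le> g0 x" "x \<in> ecar cex_W" using that W(3,4) by (auto simp: cex_W_def)
    then show "PT 0 (tp B'' 3 [g0 x]) \<in> g' ` plus_car cex_B"
      using types[rule_format, of "[g0 x]"] by (simp add: cex_B'_def)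
  qed
  then have "mono_EH F B'' (\<lambda>k. if k = 0 then 1 else if k = 1 then 2 else g0 k)"
    using W B''(1) by (intro mono_EH_FI) auto
  with B''(2) show False unfolding K_def by blast
qed

theorem proposition2:
  shows "\<not> type_respecting_AP K"
proof
  assume AP: "type_respecting_AP K"
  have "\<exists>g'. trp (\<lambda>X. X \<in> K) cex_B cex_B' g' \<and> (\<forall>x\<in>plus_car cex_A. g' (cex_f x) = cex_f' x) \<and>
      (\<forall>b\<in>ecar cex_B. g' (PB b) = PB b)"
  proof (rule AP[unfolded type_respecting_AP_def, rule_format], intro conjI)
    show "cex_A \<in> K" "cex_B \<in> K" "cex_B' \<in> K" by (fact cex_in_K)+
    then show "enumerated cex_A" "enumerated cex_B" "enumerated cex_B'" by (simp_all add: K_def)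
    show "finite (ecar cex_A)" "finite (ecar cex_B)" "finite (ecar cex_B')"
      by (simp_all add: cex_A_def cex_B_def cex_B'_def)
    have "Max {..<3::nat} = 2" by (simp add: lessThan_Suc numeral_3_eq_3)
    then show "ecar cex_B' - ecar cex_B = {Max (ecar cex_B')}" by (auto simp: cex_B_def cex_B'_def)
    show "restr cex_B' (card (ecar cex_B)) = cex_B" by (auto simp: cex_B_def cex_B'_def restr_def)
    show "trp (\<lambda>X. X \<in> K) cex_A cex_B cex_f" "trp (\<lambda>X. X \<in> K) cex_A cex_B' cex_f'"
      "trp (\<lambda>_. True) cex_B cex_B' cex_g" by (fact trp_cex_f trp_cex_f' trp_cex_g)+
    show "\<forall>b\<in>ecar cex_B. cex_g (PB b) = PB b" by (auto simp: cex_B_def shift_def)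
    show "\<forall>x\<in>plus_car cex_A. cex_g (cex_f x) = cex_f' x" using cex_g_cex_f by blast
  qed
  then show False using cex_amalgamation_fails by blast
qed

end
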